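(* Let $(X,T)$ be a linearly recurrent minimal Cantor system with unique invariant probability measure $\mu$, given by a sequence of CKR partitions satisfying (KR1)–(KR6) and (LR), such that moreover all entries of $M(n)$ are at least $2$ for $n\ge2$, and $H(1)=(1,\dots,1)^T$. Let $v\in\mathbb R^{C(1)}$ satisfy $\sum_{n\ge2}\|P(n)v\|^2<\infty$. For $n\ge1$ define $g_n(x)=\sum_{j=1}^{n-1}\langle s_j(x),P(j)v\rangle$ (with $P(1)$ the identity). Then the sequence $f_n=g_n-\mathbb E_\mu(g_n)$ converges in $L^2(X,\mathcal B_X,\mu)$.
   Context: Minimal Cantor system, CKR partitions $\mathcal P(n)=\{T^{-j}B_k(n):1\le k\le C(n),0\le j<h_k(n)\}$ with $\mathcal P(0)$ trivial, roof $B(n)=\bigcup_kB_k(n)$, conditions (KR1) $B(n+1)\subseteq B(n)$; (KR2) $\mathcal P(n+1)$ refines $\mathcal P(n)$; (KR3) $\bigcap_nB(n)$ is one point; (KR4) the partitions generate the topology; (KR5) for all $n\ge1$, $k\le C(n-1)$, $l\le C(n)$ some $0\le j<h_l(n)$ has $T^{-j}B_l(n)\subseteq B_k(n-1)$; (KR6) $B(n)\subseteq B_1(n-1)$; (LR) $h_l(n)\le Lh_k(n-1)$ for a constant $L$. $M(n)$ is the $C(n)\times C(n-1)$ matrix with $m_{l,k}(n)=\#\{0\le j<h_l(n):T^{-j}B_l(n)\subseteq B_k(n-1)\}$; $H(n)=(h_k(n))^T_k$; $P(n)=M(n)\cdots M(2)$. $r_n(x)=\min\{j\ge0:T^jx\in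 B(n)\}$; for $n\ge1$, $s_{n}(x)\in\mathbb N^{C(n)}$ has coordinates $s_{n,t}(x)=\#\{j:r_{n}(x)<j\le r_{n+1}(x),\ T^jx\in B_t(n)\}$. $\|V\|=\max_j|v_j|$. *)

theory Defs
  imports "HOL-Probability.Probability"
begin

text \<open>Conventions: towers of the n-th CKR partition are indexed by k in {1..C n};
  B n k is the roof set B_k(n), h n k its height; T^{-j}B_k(n) is the preimage
  of B_k(n) under the j-th iterate of T.\<close>

definition is_cantor_space :: "'a::metric_space set \<Rightarrow> bool" where
  "is_cantor_space X \<longleftrightarrow> X \<noteq> {} \<and> compact X \<and>
     (\<forall>x\<in>X. connected_component_set X x = {x}) \<and> (\<forall>x\<in>X. x islimpt X)"

definition minimal_system :: "('a::topological_space \<Rightarrow> 'a) \<Rightarrow> bool" where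
  "minimal_system T \<longleftrightarrow> (\<forall>A. closed A \<and> T ` A = A \<longrightarrow> A = {} \<or> A = UNIV)"

definition tlevel :: "('a \<Rightarrow> 'a) \<Rightarrow> (nat \<Rightarrow> nat \<Rightarrow> 'a set) \<Rightarrow> nat \<Rightarrow> nat \<Rightarrow> nat \<Rightarrow> 'a set" where
  "tlevel T B n k j = (T ^^ j) -` B n k"

definition roof :: "(nat \<Rightarrow> nat) \<Rightarrow> (nat \<Rightarrow> nat \<Rightarrow> 'a set) \<Rightarrow> nat \<Rightarrow> 'a set" where
  "roof C B n = (\<Union>k\<in>{1..C n}. B n k)"

definition atoms :: "('a \<Rightarrow> 'a) \<Rightarrow> (nat \<Rightarrow> nat) \<Rightarrow> (nat \<Rightarrow> nat \<Rightarrow> nat)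
    \<Rightarrow> (nat \<Rightarrow> nat \<Rightarrow> 'a set) \<Rightarrow> nat \<Rightarrow> 'a set set" where
  "atoms T C h B n = {tlevel T B n k j | k j. k \<in> {1..C n} \<and> j < h n k}"

definition CKR_partition :: "('a::topological_space \<Rightarrow> 'a) \<Rightarrow> (nat \<Rightarrow> nat) \<Rightarrow> (nat \<Rightarrow> nat \<Rightarrow> nat)
    \<Rightarrow> (nat \<Rightarrow> nat \<Rightarrow> 'a set) \<Rightarrow> nat \<Rightarrow> bool" where
  "CKR_partition T C h B n \<longleftrightarrow> C n \<ge> 1 \<and>
     (\<forall>k\<in>{1..C n}. open (B n k) \<and> closed (B n k) \<and> B n k \<noteq> {} \<and> h n k \<ge> 1) \<and>
     (\<forall>k\<in>{1..C n}. \<forall>k'\<in>{1..C n}. \<forall>j<h n k. \<forall>j'<h n k'.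
        (k, j) \<noteq> (k', j') \<longrightarrow> tlevel T B n k j \<inter> tlevel T B n k' j' = {}) \<and>
     (\<Union>k\<in>{1..C n}. \<Union>j<h n k. tlevel T B n k j) = UNIV"

definition KR_sequence :: "('a::topological_space \<Rightarrow> 'a) \<Rightarrow> (nat \<Rightarrow> nat) \<Rightarrow> (nat \<Rightarrow> nat \<Rightarrow> nat)
    \<Rightarrow> (nat \<Rightarrow> nat \<Rightarrow> 'a set) \<Rightarrow> bool" where
  "KR_sequence T C h B \<longleftrightarrow>
     (\<forall>n. CKR_partition T C h B n) \<and>
     C 0 = 1 \<and> h 0 1 = 1 \<and> B 0 1 = UNIV \<and>
     \<comment> \<open>KR1\<close> (\<forall>n. roof C B (Suc n) \<subseteq> roof C B n) \<and>
     \<comment> \<open>KR2\<close> (\<forall>n. \<forall>A\<in>atoms T C h B (Suc n). \<exists>A'\<in>atoms T C h B n. A \<subseteq> A') \<and>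
     \<comment> \<open>KR3\<close> (\<exists>x. (\<Inter>n. roof C B n) = {x}) \<and>
     \<comment> \<open>KR4\<close> topological_basis (\<Union>n. atoms T C h B n) \<and>
     \<comment> \<open>KR5\<close> (\<forall>n\<ge>1. \<forall>k\<in>{1..C (n-1)}. \<forall>l\<in>{1..C n}. \<exists>j<h n l. tlevel T B n l j \<subseteq> B (n-1) k) \<and>
     \<comment> \<open>KR6\<close> (\<forall>n\<ge>1. roof C B n \<subseteq> B (n-1) 1)"

definition linearly_recurrent_KR :: "(nat \<Rightarrow> nat) \<Rightarrow> (nat \<Rightarrow> nat \<Rightarrow> nat) \<Rightarrow> bool" where
  "linearly_recurrent_KR C h \<longleftrightarrow> (\<exists>L::real. \<forall>n\<ge>1. \<forall>l\<in>{1..C n}. \<forall>k\<in>{1..C (n-1)}.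
      real (h n l) \<le> L * real (h (n-1) k))"

definition KR_M :: "('a \<Rightarrow> 'a) \<Rightarrow> (nat \<Rightarrow> nat \<Rightarrow> nat) \<Rightarrow> (nat \<Rightarrow> nat \<Rightarrow> 'a set) \<Rightarrow> nat \<Rightarrow> nat \<Rightarrow> nat \<Rightarrow> nat" where
  "KR_M T h B n l k = card {j. j < h n l \<and> tlevel T B n l j \<subseteq> B (n-1) k}"

text \<open>P(n) = M(n) ... M(2), a C(n) x C(1) matrix; P(1) = identity (P(0) is unused).\<close>
fun KR_P :: "('a \<Rightarrow> 'a) \<Rightarrow> (nat \<Rightarrow> nat) \<Rightarrow> (nat \<Rightarrow> nat \<Rightarrow> nat) \<Rightarrow> (nat \<Rightarrow> nat \<Rightarrow> 'a set)
    \<Rightarrow> nat \<Rightarrow> nat \<Rightarrow> nat \<Rightarrow> real" where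
  "KR_P T C h B 0 = (\<lambda>l k. if l = k then 1 else 0)"
| "KR_P T C h B (Suc 0) = (\<lambda>l k. if l = k then 1 else 0)"
| "KR_P T C h B (Suc (Suc n)) = (\<lambda>l k. \<Sum>m\<in>{1..C (Suc n)}.
      real (KR_M T h B (Suc (Suc n)) l m) * KR_P T C h B (Suc n) m k)"

definition KR_Pv :: "('a \<Rightarrow> 'a) \<Rightarrow> (nat \<Rightarrow> nat) \<Rightarrow> (nat \<Rightarrow> nat \<Rightarrow> nat) \<Rightarrow> (nat \<Rightarrow> nat \<Rightarrow> 'a set)
    \<Rightarrow> (nat \<Rightarrow> real) \<Rightarrow> nat \<Rightarrow> nat \<Rightarrow> real" where
  "KR_Pv T C h B v n l = (\<Sum>k\<in>{1..C 1}. KR_P T C h B n l k * v k)"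

definition KR_Pv_norm :: "('a \<Rightarrow> 'a) \<Rightarrow> (nat \<Rightarrow> nat) \<Rightarrow> (nat \<Rightarrow> nat \<Rightarrow> nat) \<Rightarrow> (nat \<Rightarrow> nat \<Rightarrow> 'a set)
    \<Rightarrow> (nat \<Rightarrow> real) \<Rightarrow> nat \<Rightarrow> real" where
  "KR_Pv_norm T C h B v n = Max ((\<lambda>l. \<bar>KR_Pv T C h B v n l\<bar>) ` {1..C n})"

definition return_time :: "('a \<Rightarrow> 'a) \<Rightarrow> (nat \<Rightarrow> nat) \<Rightarrow> (nat \<Rightarrow> nat \<Rightarrow> 'a set) \<Rightarrow> nat \<Rightarrow> 'a \<Rightarrow> nat" where
  "return_time T C B n x = (LEAST j. (T ^^ j) x \<in> roof C B n)"

definition KR_s :: "('a \<Rightarrow> 'a) \<Rightarrow> (nat \<Rightarrow> nat) \<Rightarrow> (nat \<Rightarrow> nat \<Rightarrow> 'a set) \<Rightarrow> nat \<Rightarrow> nat \<Rightarrow> 'a \<Rightarrow> nat" where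
  "KR_s T C B n t x = card {j. return_time T C B n x < j \<and> j \<le> return_time T C B (Suc n) x
      \<and> (T ^^ j) x \<in> B n t}"

definition KR_g :: "('a \<Rightarrow> 'a) \<Rightarrow> (nat \<Rightarrow> nat) \<Rightarrow> (nat \<Rightarrow> nat \<Rightarrow> nat) \<Rightarrow> (nat \<Rightarrow> nat \<Rightarrow> 'a set)
    \<Rightarrow> (nat \<Rightarrow> real) \<Rightarrow> nat \<Rightarrow> 'a \<Rightarrow> real" where
  "KR_g T C h B v n x = (\<Sum>j\<in>{1..<n}. \<Sum>t\<in>{1..C j}. real (KR_s T C B j t x) * KR_Pv T C h B v j t)"

definition invariant_prob :: "('a::topological_space \<Rightarrow> 'a) \<Rightarrow> 'a measure \<Rightarrow> bool" where
  "invariant_prob T \<mu> \<longleftrightarrow> prob_space \<mu> \<and> sets \<mu> = sets borel \<and> T \<in> measurable \<mu> \<mu> \<and> distr \<mu> \<mu> T = \<mu>"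

end

theory Submission
  imports Defs
begin

(* Write g_n = d_1 + ... + d_(n-1) with increments d_j(x) = <s_j(x), P(j)v>.
   Each d_j is constant on the atoms of the partition P(j+1), it is unchanged when x is moved
   to the roof B(j), and |d_j| <= L ||P(j)v|| because s_j(x) is bounded entrywise by a row of
   M(j+1), and the row sums of M(j+1) are at most L by linear recurrence.  Integrating a function that
   is constant on P(n)-atoms against a function that is invariant under return to B(n) only
   sees its tower sums; passing from level j to j+1 replaces the tower averages by convex
   combinations with weights >= 2/L (this is where all entries of M(n) are >= 2 enters).
   Hence tower averages oscillate less and less, which gives the decorrelation
   |Cov(d_i, d_j)| <= const * (1 - 2/L)^(j-i-1) ||P(i)v|| ||P(j)v|| for i < j.  Summing these covariances
   bounds the variance of every block d_n + ... + d_(m-1) by const * sum_{j>=n} ||P(j)v||^2,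
   so the centred partial sums are Cauchy in L2, and completeness of L2 gives the limit. *)

lemma difference_of_averages:
  fixes w w' a :: "nat \<Rightarrow> real"
  assumes w1: "sum w S = 1" and w'1: "sum w' S = 1"
  shows "(\<Sum>t\<in>S. w t * a t) - (\<Sum>t\<in>S. w' t * a t) = (\<Sum>t\<in>S. \<Sum>t'\<in>S. w t * w' t' * (a t - a t'))"
proof -
  have "(\<Sum>t\<in>S. \<Sum>t'\<in>S. w t * w' t' * (a t - a t')) =
      (\<Sum>t\<in>S. \<Sum>t'\<in>S. (w t * a t) * w' t') - (\<Sum>t\<in>S. \<Sum>t'\<in>S. w t * (w' t' * a t'))"
    by (simp add: sum_subtractf algebra_simps)
  also have "\<dots> = (\<Sum>t\<in>S. w t * a t) - (\<Sum>t\<in>S. w' t * a t)"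
    by (simp add: sum_distrib_left[symmetric] sum_distrib_right[symmetric] w1 w'1)
  finally show ?thesis by simp
qed

lemma weighted_averages_contract:
  fixes w w' a :: "nat \<Rightarrow> real"
  assumes S: "finite S" and w0: "\<forall>t\<in>S. 0 \<le> w t" and w1: "sum w S = 1"
    and we: "\<forall>t\<in>S. e \<le> w' t" and w'1: "sum w' S = 1" and e0: "0 \<le> e"
    and aR: "\<forall>t\<in>S. \<forall>t'\<in>S. \<bar>a t - a t'\<bar> \<le> R"
  shows "\<bar>(\<Sum>t\<in>S. w t * a t) - (\<Sum>t\<in>S. w' t * a t)\<bar> \<le> (1 - e) * R"
proof -
  have "S \<noteq> {}" using w1 by auto
  then obtain t0 where "t0 \<in> S" by auto
  then have R0: "0 \<le> R" using aR by force
  have w'0: "\<forall>t\<in>S. 0 \<le> w' t" using we e0 by force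
  \<comment> \<open>the diagonal terms vanish, and off the diagonal each difference is at most R\<close>
  have "\<bar>\<Sum>t\<in>S. \<Sum>t'\<in>S. w t * w' t' * (a t - a t')\<bar> \<le> (\<Sum>t\<in>S. \<Sum>t'\<in>S. \<bar>w t * w' t' * (a t - a t')\<bar>)"
    by (rule order_trans[OF sum_abs sum_mono[OF sum_abs]])
  also have "\<dots> \<le> (\<Sum>t\<in>S. \<Sum>t'\<in>S. w t * w' t' * R - (if t = t' then w t * w' t * R else 0))"
  proof (intro sum_mono)
    fix t t' assume t: "t \<in> S" and t': "t' \<in> S"
    have "\<bar>w t * w' t' * (a t - a t')\<bar> = w t * w' t' * \<bar>a t - a t'\<bar>"
      using w0 w'0 t t' by (simp add: abs_mult)
    also have "\<dots> \<le> w t * w' t' * R" using aR t t' w0 w'0 by (intro mult_left_mono) auto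
    finally show "\<bar>w t * w' t' * (a t - a t')\<bar> \<le> w t * w' t' * R - (if t = t' then w t * w' t * R else 0)"
      by (cases "t = t'") simp_all
  qed
  also have "\<dots> = (\<Sum>t\<in>S. w t * R - w t * w' t * R)"
  proof (rule sum.cong[OF refl])
    fix t assume t: "t \<in> S"
    have "(\<Sum>t'\<in>S. w t * w' t' * R) = w t * R"
      using w'1 by (simp add: sum_distrib_left[symmetric] sum_distrib_right[symmetric] mult.commute mult.left_commute)
    moreover have "(\<Sum>t'\<in>S. (if t = t' then w t * w' t * R else 0)) = w t * w' t * R"
      using S t by (simp add: sum.delta)
    ultimately show "(\<Sum>t'\<in>S. w t * w' t' * R - (if t = t' then w t * w' t * R else 0)) = w t * R - w t * w' t * R"
      by (simp add: sum_subtractf)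
  qed
  also have "\<dots> = R - (\<Sum>t\<in>S. w t * w' t) * R"
    by (simp add: sum_subtractf sum_distrib_right[symmetric] w1)
  also have "\<dots> \<le> R - e * R"
  proof -
    have "(\<Sum>t\<in>S. w t * e) \<le> (\<Sum>t\<in>S. w t * w' t)" using w0 we by (intro sum_mono mult_left_mono) auto
    then have "e \<le> (\<Sum>t\<in>S. w t * w' t)" using w1 by (simp add: sum_distrib_right[symmetric])
    then show ?thesis using R0 by (simp add: mult_right_mono)
  qed
  finally show ?thesis unfolding difference_of_averages[OF w1 w'1] by (simp add: algebra_simps)
qed

subsection \<open>Quadratic forms with geometrically decaying coefficients\<close>

definition gap :: "nat \<Rightarrow> nat \<Rightarrow> nat" where "gap i j = (if i \<le> j then j - i else i - j)"

lemma gap_sym: "gap i j = gap j i" unfolding gap_def by auto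

lemma geometric_sum_inj:
  fixes \<rho> :: real assumes r: "0 \<le> \<rho>" "\<rho> < 1" and J: "finite J" and inj: "inj_on f J"
  shows "(\<Sum>j\<in>J. \<rho> ^ f j) \<le> 1 / (1 - \<rho>)"
proof -
  have "(\<Sum>j\<in>J. \<rho> ^ f j) = (\<Sum>n\<in>f ` J. \<rho> ^ n)" by (simp add: sum.reindex[OF inj])
  also have "\<dots> \<le> (\<Sum>n. \<rho> ^ n)"
    by (rule sum_le_suminf) (use r J in \<open>auto intro: summable_geometric\<close>)
  also have "\<dots> = 1 / (1 - \<rho>)" using r by (simp add: suminf_geometric)
  finally show ?thesis .
qed

lemma geometric_sum_gap:
  fixes \<rho> :: real assumes r: "0 \<le> \<rho>" "\<rho> < 1" and J: "finite J"
  shows "(\<Sum>j\<in>J. \<rho> ^ gap i j) \<le> 2 / (1 - \<rho>)"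
proof -
  have "(\<Sum>j\<in>J. \<rho> ^ gap i j) = (\<Sum>j\<in>J \<inter> {..i}. \<rho> ^ (i - j)) + (\<Sum>j\<in>J - {..i}. \<rho> ^ (j - i))"
    by (subst sum.Int_Diff[OF J, of _ "{..i}"], intro arg_cong2[where f = "(+)"] sum.cong)
      (auto simp: gap_def)
  also have "\<dots> \<le> 1 / (1 - \<rho>) + 1 / (1 - \<rho>)"
    by (intro add_mono geometric_sum_inj[OF r]) (use J in \<open>auto simp: inj_on_def\<close>)
  finally show ?thesis by simp
qed

text \<open>A quadratic form whose coefficients decay geometrically away from the diagonal is
  dominated by the sum of squares of the weights (Schur test).\<close>
lemma quadratic_form_bound:
  fixes c :: "nat \<Rightarrow> nat \<Rightarrow> real" and p :: "nat \<Rightarrow> real" and \<rho> K :: real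
  assumes r: "0 \<le> \<rho>" "\<rho> < 1" and J: "finite J" and K: "0 \<le> K"
    and cb: "\<And>i j. i \<in> J \<Longrightarrow> j \<in> J \<Longrightarrow> \<bar>c i j\<bar> \<le> K * \<rho> ^ gap i j * p i * p j"
  shows "(\<Sum>i\<in>J. \<Sum>j\<in>J. c i j) \<le> K * (2 / (1 - \<rho>)) * (\<Sum>j\<in>J. (p j)\<^sup>2)"
proof -
  define a where "a i j = K / 2 * (\<rho> ^ gap i j * (p i)\<^sup>2)" for i j
  have "(\<Sum>i\<in>J. \<Sum>j\<in>J. c i j) \<le> (\<Sum>i\<in>J. \<Sum>j\<in>J. a i j + a j i)"
  proof (intro sum_mono)
    fix i j assume i: "i \<in> J" and j: "j \<in> J"
    have "p i * p j \<le> ((p i)\<^sup>2 + (p j)\<^sup>2) / 2"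
      using sum_squares_bound[of "p i" "p j"] by (simp add: power2_eq_square field_simps)
    then have "K * \<rho> ^ gap i j * (p i * p j) \<le> K * \<rho> ^ gap i j * (((p i)\<^sup>2 + (p j)\<^sup>2) / 2)"
      using K r by (intro mult_left_mono) auto
    then show "c i j \<le> a i j + a j i"
      using cb[OF i j] by (simp add: a_def gap_sym mult.assoc abs_le_iff field_simps)
  qed
  also have "\<dots> = 2 * (\<Sum>i\<in>J. \<Sum>j\<in>J. a i j)"
    by (simp add: sum.distrib sum.swap[of "\<lambda>i j. a j i"])
  also have "\<dots> = 2 * (\<Sum>i\<in>J. K / 2 * (p i)\<^sup>2 * (\<Sum>j\<in>J. \<rho> ^ gap i j))"
    unfolding a_def sum_distrib_left by (intro arg_cong[where f = "(*) 2"] sum.cong refl) (simp add: mult_ac)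
  also have "\<dots> \<le> 2 * (\<Sum>i\<in>J. K / 2 * (p i)\<^sup>2 * (2 / (1 - \<rho>)))"
    by (intro mult_left_mono sum_mono geometric_sum_gap[OF r J]) (use K in auto)
  also have "\<dots> = (\<Sum>i\<in>J. K * (2 / (1 - \<rho>)) * (p i)\<^sup>2)"
    unfolding sum_distrib_left by (intro sum.cong refl) simp
  also have "\<dots> = K * (2 / (1 - \<rho>)) * (\<Sum>j\<in>J. (p j)\<^sup>2)"
    by (simp add: sum_distrib_left)
  finally show ?thesis .
qed

subsection \<open>Completeness of L2\<close>

text \<open>Elementary estimate behind the almost sure convergence of a fast L2-Cauchy subsequence.\<close>
lemma linear_le_quadratic:
  fixes a d :: real assumes a: "a > 0" and d: "d \<ge> 0"
  shows "d \<le> 1 / a + a * d\<^sup>2"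
proof (cases "d \<le> 1 / a")
  case True
  then show ?thesis using a by (simp add: add_increasing2)
next
  case False
  then have "1 \<le> a * d" using a by (simp add: field_simps)
  then have "d \<le> a * d\<^sup>2" using d mult_left_mono[of 1 "a * d" d] by (simp add: power2_eq_square mult_ac)
  then show ?thesis using a by (simp add: add_increasing)
qed

lemma fast_subsequence:
  fixes e :: "nat \<Rightarrow> real"
  assumes "e \<longlonglongrightarrow> 0" and "0 < r"
  obtains \<sigma> :: "nat \<Rightarrow> nat" where "mono \<sigma>" "\<And>k. k \<le> \<sigma> k" "\<And>k. e (\<sigma> k) < r ^ k"
proof -
  have "\<forall>k. \<exists>N. \<forall>n\<ge>N. e n < r ^ k"
    using order_tendstoD(2)[OF assms(1)] assms(2) by (simp add: eventually_sequentially)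
  then obtain N where N: "\<And>k n. N k \<le> n \<Longrightarrow> e n < r ^ k" by metis
  define \<sigma> where "\<sigma> k = k + (\<Sum>i\<le>k. N i)" for k
  have "mono \<sigma>" unfolding \<sigma>_def by (intro monoI add_mono sum_mono2) auto
  moreover have "N k \<le> \<sigma> k" for k unfolding \<sigma>_def using member_le_sum[of k "{..k}" N] by simp
  ultimately show ?thesis using that N by (auto simp: \<sigma>_def)
qed

lemma ae_summable_fast_L2:
  fixes D :: "nat \<Rightarrow> 'a \<Rightarrow> real"
  assumes meas: "\<And>k. D k \<in> borel_measurable M"
    and fast: "\<And>k. (\<integral>\<^sup>+ x. ennreal ((D k x)\<^sup>2) \<partial>M) \<le> ennreal ((1/4) ^ k)"
  shows "AE x in M. summable (\<lambda>k. D k x)"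
proof -
  note meas[measurable]
  have step: "(\<integral>\<^sup>+ x. ennreal (2 ^ k * (D k x)\<^sup>2) \<partial>M) \<le> ennreal ((1/2) ^ k)" for k
  proof -
    have "ennreal (2 ^ k * (D k x)\<^sup>2) = ennreal (2 ^ k) * ennreal ((D k x)\<^sup>2)" for x
      by (rule ennreal_mult) auto
    then have "(\<integral>\<^sup>+ x. ennreal (2 ^ k * (D k x)\<^sup>2) \<partial>M) = ennreal (2 ^ k) * (\<integral>\<^sup>+ x. ennreal ((D k x)\<^sup>2) \<partial>M)"
      by (simp add: nn_integral_cmult)
    also have "\<dots> \<le> ennreal (2 ^ k) * ennreal ((1/4) ^ k)" by (intro mult_left_mono fast) simp
    also have "\<dots> = ennreal ((1/2) ^ k)"
      by (simp add: ennreal_mult[symmetric] power_mult_distrib[symmetric])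
    finally show ?thesis .
  qed
  define G where "G x = (\<Sum>k. ennreal (2 ^ k * (D k x)\<^sup>2))" for x
  have Gm: "(\<lambda>x. ennreal (2 ^ k * (D k x)\<^sup>2)) \<in> borel_measurable M" for k by measurable
  have "(\<integral>\<^sup>+ x. G x \<partial>M) = (\<Sum>k. \<integral>\<^sup>+ x. ennreal (2 ^ k * (D k x)\<^sup>2) \<partial>M)"
    unfolding G_def by (rule nn_integral_suminf[OF Gm])
  also have "\<dots> \<le> (\<Sum>k. ennreal ((1/2) ^ k))" by (intro suminf_le step) auto
  also have "\<dots> = ennreal 2"
    by (subst suminf_ennreal2) (auto simp: suminf_geometric summable_geometric)
  finally have "(\<integral>\<^sup>+ x. G x \<partial>M) \<noteq> \<infinity>" using neq_top_trans by force
  then have "AE x in M. G x \<noteq> \<infinity>"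
    by (rule nn_integral_noteq_infinite[rotated]) (unfold G_def, rule borel_measurable_suminf_order[OF Gm])
  then show ?thesis
  proof eventually_elim
    case (elim x)
    \<comment> \<open>|D_k| \<le> 2^-k + 2^k D_k^2, and both series on the right converge\<close>
    have s1: "summable (\<lambda>k. 2 ^ k * (D k x)\<^sup>2)"
      by (rule summable_suminf_not_top) (use elim in \<open>auto simp: G_def\<close>)
    have s2: "summable (\<lambda>k. (1/2) ^ k + 2 ^ k * (D k x)\<^sup>2)"
      by (intro summable_add s1 summable_geometric) simp
    have b: "norm \<bar>D k x\<bar> \<le> (1/2) ^ k + 2 ^ k * (D k x)\<^sup>2" for k
      using linear_le_quadratic[of "2 ^ k" "\<bar>D k x\<bar>"] by (simp add: power_divide)
    show ?case by (rule summable_rabs_cancel[OF summable_comparison_test'[OF s2 b]])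
  qed
qed

lemma nn_integral_square_Fatou:
  fixes G :: "nat \<Rightarrow> 'a \<Rightarrow> real"
  assumes meas: "\<And>k. G k \<in> borel_measurable M" and lim: "AE x in M. (\<lambda>k. G k x) \<longlonglongrightarrow> g x"
    and bound: "\<forall>\<^sub>F k in sequentially. (\<integral>\<^sup>+ x. ennreal ((G k x)\<^sup>2) \<partial>M) \<le> c"
  shows "(\<integral>\<^sup>+ x. ennreal ((g x)\<^sup>2) \<partial>M) \<le> c"
proof -
  note meas[measurable]
  have "(\<integral>\<^sup>+ x. ennreal ((g x)\<^sup>2) \<partial>M) = (\<integral>\<^sup>+ x. liminf (\<lambda>k. ennreal ((G k x)\<^sup>2)) \<partial>M)"
  proof (rule nn_integral_cong_AE)
    show "AE x in M. ennreal ((g x)\<^sup>2) = liminf (\<lambda>k. ennreal ((G k x)\<^sup>2))"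
      using lim
    proof eventually_elim
      case (elim x)
      then have "(\<lambda>k. ennreal ((G k x)\<^sup>2)) \<longlonglongrightarrow> ennreal ((g x)\<^sup>2)"
        by (intro tendsto_ennrealI tendsto_power)
      then show ?case by (rule lim_imp_Liminf[OF trivial_limit_sequentially, symmetric])
    qed
  qed
  also have "\<dots> \<le> liminf (\<lambda>k. \<integral>\<^sup>+ x. ennreal ((G k x)\<^sup>2) \<partial>M)"
    by (rule nn_integral_liminf) measurable
  also have "\<dots> \<le> c" by (rule Liminf_le[OF trivial_limit_sequentially bound])
  finally show ?thesis .
qed

text \<open>The limit is the almost sure limit of a subsequence
  with summable increments.\<close>
lemma L2_Cauchy_limit:
  fixes F :: "nat \<Rightarrow> 'a \<Rightarrow> real" and e :: "nat \<Rightarrow> real"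
  assumes meas: "\<And>n. F n \<in> borel_measurable M"
    and cauchy: "\<And>m n. n \<le> m \<Longrightarrow> (\<integral>\<^sup>+ x. ennreal ((F m x - F n x)\<^sup>2) \<partial>M) \<le> ennreal (e n)"
    and rate: "e \<longlonglongrightarrow> 0"
  obtains f where "f \<in> borel_measurable M"
    and "\<And>n. (\<integral>\<^sup>+ x. ennreal ((F n x - f x)\<^sup>2) \<partial>M) \<le> ennreal (e n)"
proof -
  obtain \<sigma> where mono: "mono \<sigma>" and ge: "\<And>k. k \<le> \<sigma> k" and fast: "\<And>k. e (\<sigma> k) < (1/4) ^ k"
    using fast_subsequence[OF rate, of "1/4"] by auto
  note meas[measurable]
  define D where "D k x = F (\<sigma> (Suc k)) x - F (\<sigma> k) x" for k x
  have "(\<integral>\<^sup>+ x. ennreal ((D k x)\<^sup>2) \<partial>M) \<le> ennreal ((1/4) ^ k)" for k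
  proof -
    have "(\<integral>\<^sup>+ x. ennreal ((D k x)\<^sup>2) \<partial>M) \<le> ennreal (e (\<sigma> k))"
      unfolding D_def by (rule cauchy) (use mono in \<open>simp add: incseq_SucD\<close>)
    also have "\<dots> \<le> ennreal ((1/4) ^ k)" using fast[of k] by (intro ennreal_leI) simp
    finally show ?thesis .
  qed
  then have "AE x in M. summable (\<lambda>k. D k x)" by (intro ae_summable_fast_L2) (simp_all add: D_def)
  then have ae_conv: "AE x in M. convergent (\<lambda>k. F (\<sigma> k) x)"
  proof eventually_elim
    case (elim x)
    have "F (\<sigma> 0) x + (\<Sum>i<k. D i x) = F (\<sigma> k) x" for k
      unfolding D_def by (induction k) auto
    moreover have "(\<lambda>k. F (\<sigma> 0) x + (\<Sum>i<k. D i x)) \<longlonglongrightarrow> F (\<sigma> 0) x + (\<Sum>i. D i x)"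
      by (intro tendsto_add tendsto_const summable_LIMSEQ elim)
    ultimately show ?case unfolding convergent_def by auto
  qed
  define f where "f x = lim (\<lambda>k. F (\<sigma> k) x)" for x
  have "f \<in> borel_measurable M" unfolding f_def by (rule borel_measurable_lim_metric[OF meas])
  moreover have "(\<integral>\<^sup>+ x. ennreal ((F n x - f x)\<^sup>2) \<partial>M) \<le> ennreal (e n)" for n
  proof (rule nn_integral_square_Fatou[where G = "\<lambda>k x. F n x - F (\<sigma> k) x"])
    show "AE x in M. (\<lambda>k. F n x - F (\<sigma> k) x) \<longlonglongrightarrow> F n x - f x"
      using ae_conv by eventually_elim (simp add: f_def convergent_LIMSEQ_iff tendsto_diff)
    have "\<sigma> k \<ge> n" if "k \<ge> n" for k using ge[of k] that by simp
    then show "\<forall>\<^sub>F k in sequentially. (\<integral>\<^sup>+ x. ennreal ((F n x - F (\<sigma> k) x)\<^sup>2) \<partial>M) \<le> ennreal (e n)"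
      unfolding eventually_sequentially using cauchy by (simp add: power2_commute) blast
  qed simp
  ultimately show ?thesis using that by blast
qed

subsection \<open>Kakutani--Rokhlin towers\<close>

text \<open>The setting of the theorem: a homeomorphism T with an invariant probability measure \<mu>,
  a KR sequence of partitions that is linearly recurrent with constant L (enlarged to L \<ge> 2),
  and all entries of the matrices M(n), n \<ge> 2, at least 2.\<close>
locale KR_system =
  fixes T :: "'a::metric_space \<Rightarrow> 'a" and C :: "nat \<Rightarrow> nat" and h :: "nat \<Rightarrow> nat \<Rightarrow> nat"
    and B :: "nat \<Rightarrow> nat \<Rightarrow> 'a set" and \<mu> :: "'a measure" and L :: real
  assumes bijT: "bij T" and contT: "continuous_on UNIV T"
    and KR: "KR_sequence T C h B"
    and inv_mu: "invariant_prob T \<mu>"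
    and L_ge2: "L \<ge> 2"
    and LR: "\<And>n l k. n \<ge> 1 \<Longrightarrow> l \<in> {1..C n} \<Longrightarrow> k \<in> {1..C (n-1)} \<Longrightarrow> real (h n l) \<le> L * real (h (n-1) k)"
    and M_ge2: "\<And>n l k. n \<ge> 2 \<Longrightarrow> l \<in> {1..C n} \<Longrightarrow> k \<in> {1..C (n-1)} \<Longrightarrow> KR_M T h B n l k \<ge> 2"
begin

abbreviation "lev \<equiv> tlevel T B"

lemma CKR: "CKR_partition T C h B n" using KR unfolding KR_sequence_def by auto

lemma C_pos: "C n \<ge> 1" using CKR[of n] unfolding CKR_partition_def by auto
lemma B_nonempty: "k \<in> {1..C n} \<Longrightarrow> B n k \<noteq> {}" using CKR[of n] unfolding CKR_partition_def by auto
lemma B_open: "k \<in> {1..C n} \<Longrightarrow> open (B n k)" using CKR[of n] unfolding CKR_partition_def by auto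
lemma h_pos: "k \<in> {1..C n} \<Longrightarrow> h n k \<ge> 1" using CKR[of n] unfolding CKR_partition_def by auto

lemma lev_disjoint: "k \<in> {1..C n} \<Longrightarrow> k' \<in> {1..C n} \<Longrightarrow> j < h n k \<Longrightarrow> j' < h n k' \<Longrightarrow>
   x \<in> lev n k j \<Longrightarrow> x \<in> lev n k' j' \<Longrightarrow> k = k' \<and> j = j'"
  using CKR[of n] unfolding CKR_partition_def by blast

lemma lev_cover: "\<exists>k j. k \<in> {1..C n} \<and> j < h n k \<and> x \<in> lev n k j"
proof -
  have "x \<in> (\<Union>k\<in>{1..C n}. \<Union>j<h n k. lev n k j)" using CKR[of n] unfolding CKR_partition_def by auto
  then show ?thesis by blast
qed

definition atom_index :: "nat \<Rightarrow> (nat \<times> nat) set" where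
  "atom_index n = (SIGMA k:{1..C n}. {..<h n k})"

lemma atom_index_iff: "(k, j) \<in> atom_index n \<longleftrightarrow> k \<in> {1..C n} \<and> j < h n k"
  unfolding atom_index_def by auto

lemma finite_atom_index: "finite (atom_index n)" unfolding atom_index_def by auto

definition atom_of :: "nat \<Rightarrow> 'a \<Rightarrow> nat \<times> nat" where
  "atom_of n x = (SOME p. p \<in> atom_index n \<and> x \<in> lev n (fst p) (snd p))"

lemma atom_of_in: "atom_of n x \<in> atom_index n \<and> x \<in> lev n (fst (atom_of n x)) (snd (atom_of n x))"
proof -
  obtain k j where "k \<in> {1..C n} \<and> j < h n k \<and> x \<in> lev n k j" using lev_cover by blast
  then have "\<exists>p. p \<in> atom_index n \<and> x \<in> lev n (fst p) (snd p)"
    by (intro exI[of _ "(k, j)"]) (auto simp: atom_index_iff)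
  then show ?thesis unfolding atom_of_def by (rule someI_ex)
qed

lemma atom_ofI: "(k, j) \<in> atom_index n \<Longrightarrow> x \<in> lev n k j \<Longrightarrow> atom_of n x = (k, j)"
  using atom_of_in[of n x] lev_disjoint[of "fst (atom_of n x)" n k "snd (atom_of n x)" j x]
  by (cases "atom_of n x") (auto simp: atom_index_iff)

lemma atom_of_iff: "(k, j) \<in> atom_index n \<Longrightarrow> x \<in> lev n k j \<longleftrightarrow> atom_of n x = (k, j)"
  using atom_ofI atom_of_in[of n x] by auto

definition tower :: "nat \<Rightarrow> 'a \<Rightarrow> nat" where "tower n x = fst (atom_of n x)"
definition level :: "nat \<Rightarrow> 'a \<Rightarrow> nat" where "level n x = snd (atom_of n x)"

lemma atom_of_split: "atom_of n x = (tower n x, level n x)" unfolding tower_def level_def by simp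
lemma tower_range: "tower n x \<in> {1..C n}"
  using atom_of_in[of n x] unfolding tower_def atom_index_def by auto
lemma level_range: "level n x < h n (tower n x)"
  using atom_of_in[of n x] unfolding tower_def level_def atom_index_def by auto
lemma in_own_level: "x \<in> lev n (tower n x) (level n x)"
  using atom_of_in[of n x] unfolding tower_def level_def by auto

lemma atom_of_shift: "i \<le> level n x \<Longrightarrow> atom_of n ((T ^^ i) x) = (tower n x, level n x - i)"
proof (rule atom_ofI)
  assume i: "i \<le> level n x"
  show "(tower n x, level n x - i) \<in> atom_index n"
    using tower_range[of n x] level_range[of n x] by (auto simp: atom_index_iff)
  have "(T ^^ (level n x - i)) ((T ^^ i) x) = (T ^^ level n x) x"
    using i by (metis funpow_add le_add_diff_inverse2 o_apply)
  then show "(T ^^ i) x \<in> lev n (tower n x) (level n x - i)"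
    using in_own_level[of x n] by (simp add: tlevel_def)
qed

lemma roof_set_iff: "k \<in> {1..C n} \<Longrightarrow> x \<in> B n k \<longleftrightarrow> atom_of n x = (k, 0)"
  using atom_of_iff[of k 0 n x] h_pos[of k n] by (auto simp: atom_index_iff tlevel_def)

lemma roof_iff: "x \<in> roof C B n \<longleftrightarrow> level n x = 0"
proof
  assume "x \<in> roof C B n"
  then obtain k where "k \<in> {1..C n}" "x \<in> B n k" unfolding roof_def by auto
  then show "level n x = 0" using roof_set_iff atom_of_split by auto
next
  assume "level n x = 0"
  then have "x \<in> B n (tower n x)" using in_own_level[of x n] by (simp add: tlevel_def)
  then show "x \<in> roof C B n" using tower_range unfolding roof_def by auto
qed

lemma reaches_roof: "(T ^^ level n x) x \<in> roof C B n"
  using atom_of_shift[of "level n x" n x] roof_iff atom_of_split by auto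

lemma return_time_eq_level: "return_time T C B n x = level n x"
  unfolding return_time_def
proof (rule Least_equality)
  show "(T ^^ level n x) x \<in> roof C B n" by (rule reaches_roof)
next
  fix y assume "(T ^^ y) x \<in> roof C B n"
  then have "level n ((T ^^ y) x) = 0" using roof_iff by auto
  then show "level n x \<le> y" using atom_of_shift[of y n x] atom_of_split by (cases "y \<le> level n x") auto
qed

lemma KR2: "A \<in> atoms T C h B (Suc n) \<Longrightarrow> \<exists>A'\<in>atoms T C h B n. A \<subseteq> A'"
  using KR unfolding KR_sequence_def by blast

lemma atom_refines_Suc: "atom_of (Suc n) x = atom_of (Suc n) y \<Longrightarrow> atom_of n x = atom_of n y"
proof -
  assume e: "atom_of (Suc n) x = atom_of (Suc n) y"
  let ?A = "lev (Suc n) (tower (Suc n) x) (level (Suc n) x)"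
  have "?A \<in> atoms T C h B (Suc n)" unfolding atoms_def using tower_range level_range by blast
  then obtain A' where A': "A' \<in> atoms T C h B n" "?A \<subseteq> A'" using KR2 by blast
  then obtain k j where kj: "(k, j) \<in> atom_index n" "A' = lev n k j"
    unfolding atoms_def atom_index_iff by blast
  have "x \<in> ?A" "y \<in> ?A" using in_own_level[of x "Suc n"] in_own_level[of y "Suc n"] e
    unfolding tower_def level_def by simp_all
  then have "x \<in> lev n k j" "y \<in> lev n k j" using A' kj by auto
  then show ?thesis using kj(1) atom_ofI by metis
qed

lemma atom_refines: "m \<le> n \<Longrightarrow> atom_of n x = atom_of n y \<Longrightarrow> atom_of m x = atom_of m y"
proof (induction n rule: dec_induct)
  case (step n) then show ?case using atom_refines_Suc by blast
qed simp

lemma KR1: "roof C B (Suc n) \<subseteq> roof C B n" using KR unfolding KR_sequence_def by blast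

lemma roof_mono: "m \<le> n \<Longrightarrow> roof C B n \<subseteq> roof C B m"
proof (induction n rule: dec_induct)
  case (step n) then show ?case using KR1[of n] by blast
qed simp

lemma level_mono: "m \<le> n \<Longrightarrow> level m x \<le> level n x"
proof -
  assume "m \<le> n"
  then have "(T ^^ level n x) x \<in> roof C B m" using roof_mono reaches_roof by blast
  then show ?thesis using return_time_eq_level[of m x] unfolding return_time_def by (metis Least_le)
qed

definition rep :: "nat \<Rightarrow> nat \<times> nat \<Rightarrow> 'a" where
  "rep n p = (inv T ^^ snd p) (SOME b. b \<in> B n (fst p))"

lemma Tpow_inv: "(T ^^ q) ((inv T ^^ q) y) = y"
  using fn_o_inv_fn_is_id[OF bijT, of q] by (simp add: fun_eq_iff)

lemma atom_of_rep: "p \<in> atom_index n \<Longrightarrow> atom_of n (rep n p) = p"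
proof -
  assume p: "p \<in> atom_index n"
  obtain k q where pk: "p = (k, q)" by (cases p)
  have k: "k \<in> {1..C n}" using p pk by (auto simp: atom_index_iff)
  have "(SOME b. b \<in> B n k) \<in> B n k" using B_nonempty[OF k] by (simp add: some_in_eq)
  then have "rep n p \<in> lev n k q" unfolding rep_def pk tlevel_def using Tpow_inv by simp
  then show ?thesis using atom_ofI p pk by simp
qed

definition atomic :: "nat \<Rightarrow> ('a \<Rightarrow> 'b) \<Rightarrow> bool" where
  "atomic n f \<longleftrightarrow> (\<forall>x y. atom_of n x = atom_of n y \<longrightarrow> f x = f y)"

lemma atomic_mono: "m \<le> n \<Longrightarrow> atomic m f \<Longrightarrow> atomic n f"
  unfolding atomic_def using atom_refines by blast

lemma atomic_rep: "atomic n f \<Longrightarrow> f (rep n (atom_of n x)) = f x"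
  unfolding atomic_def using atom_of_rep atom_of_in by blast

lemma atomic_const: "atomic n (\<lambda>x. c)" unfolding atomic_def by simp

lemma atomic_comp: "atomic n f \<Longrightarrow> atomic n (\<lambda>x. g (f x))" unfolding atomic_def by metis

lemma atomic_comp2: "atomic n f \<Longrightarrow> atomic n g \<Longrightarrow> atomic n (\<lambda>x. k (f x) (g x))"
  unfolding atomic_def by metis

lemma atomic_comp2': "atomic m f \<Longrightarrow> atomic n g \<Longrightarrow> atomic (m + n) (\<lambda>x. k (f x) (g x))"
  by (rule atomic_comp2[OF atomic_mono[of m] atomic_mono[of n]]) simp_all

lemma atomic_indicator_roof: "t \<in> {1..C j} \<Longrightarrow> atomic j (\<lambda>x. indicator (B j t) x :: real)"
  unfolding atomic_def indicator_def using roof_set_iff by simp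

lemma atomic_expansion:
  assumes a: "atomic n (f :: 'a \<Rightarrow> real)"
  shows "f x = (\<Sum>p\<in>atom_index n. f (rep n p) * indicator (lev n (fst p) (snd p)) x)"
proof -
  have "(\<Sum>p\<in>atom_index n. f (rep n p) * indicator (lev n (fst p) (snd p)) x)
      = (\<Sum>p\<in>atom_index n. if p = atom_of n x then f x else 0)"
  proof (rule sum.cong[OF refl])
    fix p assume p: "p \<in> atom_index n"
    have "x \<in> lev n (fst p) (snd p) \<longleftrightarrow> p = atom_of n x" using atom_of_iff[of "fst p" "snd p" n x] p by auto
    then show "f (rep n p) * indicator (lev n (fst p) (snd p)) x = (if p = atom_of n x then f x else 0)"
      using atomic_rep[OF a, of x] by (simp add: indicator_def)
  qed
  also have "\<dots> = f x" using atom_of_in[of n x] finite_atom_index[of n] by (simp add: sum.delta')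
  finally show ?thesis by simp
qed

lemma atomic_bounded: "atomic n (f :: 'a \<Rightarrow> real) \<Longrightarrow> \<exists>c. \<forall>x. \<bar>f x\<bar> \<le> c"
proof -
  assume a: "atomic n f"
  have "\<bar>f x\<bar> \<le> (\<Sum>p\<in>atom_index n. \<bar>f (rep n p)\<bar>)" for x
    unfolding atomic_rep[OF a, of x, symmetric]
    by (rule member_le_sum) (use atom_of_in finite_atom_index in auto)
  then show ?thesis by blast
qed

lemma sets_mu: "sets \<mu> = sets borel" using inv_mu unfolding invariant_prob_def by auto
lemma mu_prob: "prob_space \<mu>" using inv_mu unfolding invariant_prob_def by auto
lemma T_meas: "T \<in> measurable \<mu> \<mu>" using inv_mu unfolding invariant_prob_def by auto
lemma distr_T: "distr \<mu> \<mu> T = \<mu>" using inv_mu unfolding invariant_prob_def by auto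

lemma integral_const: "(\<integral>x. (c::real) \<partial>\<mu>) = c"
  using prob_space.prob_space[OF mu_prob] by simp

lemma Tpow_continuous: "continuous (at x) (T ^^ q)"
proof (induction q arbitrary: x)
  case (Suc q)
  have "continuous (at y) T" for y using contT by (simp add: continuous_on_eq_continuous_at)
  then show ?case unfolding funpow.simps by (rule continuous_at_compose[OF Suc])
qed (simp add: id_def)

text \<open>Levels are open, hence Borel sets.\<close>
lemma lev_sets: "k \<in> {1..C n} \<Longrightarrow> lev n k q \<in> sets \<mu>"
  using continuous_open_vimage[OF B_open Tpow_continuous] sets_mu unfolding tlevel_def by auto

lemma B_sets: "k \<in> {1..C n} \<Longrightarrow> B n k \<in> sets \<mu>"
  using B_open sets_mu by auto

lemma atomic_measurable: "atomic n (f :: 'a \<Rightarrow> real) \<Longrightarrow> f \<in> borel_measurable \<mu>"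
proof -
  assume a: "atomic n f"
  have "(\<lambda>x. \<Sum>p\<in>atom_index n. f (rep n p) * indicator (lev n (fst p) (snd p)) x) \<in> borel_measurable \<mu>"
  proof (rule borel_measurable_sum)
    fix p assume "p \<in> atom_index n"
    then have [measurable]: "lev n (fst p) (snd p) \<in> sets \<mu>" using lev_sets by (cases p) (auto simp: atom_index_iff)
    show "(\<lambda>x. f (rep n p) * indicator (lev n (fst p) (snd p)) x) \<in> borel_measurable \<mu>" by measurable
  qed
  moreover have "f = (\<lambda>x. \<Sum>p\<in>atom_index n. f (rep n p) * indicator (lev n (fst p) (snd p)) x)"
    using atomic_expansion[OF a] by (rule ext)
  ultimately show ?thesis by (simp only:)
qed

lemma bounded_integrable: "f \<in> borel_measurable \<mu> \<Longrightarrow> (\<And>x. \<bar>f x\<bar> \<le> c) \<Longrightarrow> integrable \<mu> (f :: 'a \<Rightarrow> real)"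
proof -
  assume m: "f \<in> borel_measurable \<mu>" and b: "\<And>x. \<bar>f x\<bar> \<le> c"
  have "AE x in \<mu>. norm (f x) \<le> c" using b by (intro AE_I2) simp
  then show ?thesis
    using finite_measure.integrable_const_bound[OF prob_space.finite_measure[OF mu_prob], of f c] m by blast
qed

lemma atomic_integrable: "atomic n (f :: 'a \<Rightarrow> real) \<Longrightarrow> integrable \<mu> f"
proof -
  assume a: "atomic n f"
  then obtain c where "\<And>x. \<bar>f x\<bar> \<le> c" using atomic_bounded by blast
  then show ?thesis by (rule bounded_integrable[OF atomic_measurable[OF a]])
qed

lemma integral_atomic_le: "atomic n (f :: 'a \<Rightarrow> real) \<Longrightarrow> (\<And>x. f x \<le> c) \<Longrightarrow> (\<integral>x. f x \<partial>\<mu>) \<le> c"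
proof -
  assume a: "atomic n f" and b: "\<And>x. f x \<le> c"
  have "(\<integral>x. f x \<partial>\<mu>) \<le> (\<integral>x. c \<partial>\<mu>)"
    by (rule integral_mono[OF atomic_integrable[OF a] atomic_integrable[OF atomic_const] b])
  then show ?thesis by (simp only: integral_const)
qed

lemma Tpow_meas: "(T ^^ q) \<in> measurable \<mu> \<mu>"
proof (induction q)
  case (Suc q) show ?case unfolding funpow.simps by (rule measurable_comp[OF Suc T_meas])
qed simp

lemma integral_Tpow: "(f :: 'a \<Rightarrow> real) \<in> borel_measurable \<mu> \<Longrightarrow> (\<integral>x. f ((T ^^ q) x) \<partial>\<mu>) = (\<integral>x. f x \<partial>\<mu>)"
proof (induction q)
  case (Suc q)
  have m: "(\<lambda>x. f ((T ^^ q) x)) \<in> borel_measurable \<mu>" by (rule measurable_compose[OF Tpow_meas Suc.prems])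
  have "(\<integral>x. f ((T ^^ Suc q) x) \<partial>\<mu>) = (\<integral>x. (\<lambda>y. f ((T ^^ q) y)) (T x) \<partial>\<mu>)"
    by (simp add: funpow_Suc_right del: funpow.simps)
  also have "\<dots> = integral\<^sup>L (distr \<mu> \<mu> T) (\<lambda>y. f ((T ^^ q) y))"
    by (rule integral_distr[OF T_meas m, symmetric])
  also have "\<dots> = (\<integral>x. f x \<partial>\<mu>)" using distr_T Suc by simp
  finally show ?case .
qed simp

subsection \<open>Integrals over towers\<close>

definition tower_sum :: "('a \<Rightarrow> real) \<Rightarrow> nat \<Rightarrow> nat \<Rightarrow> real" where
  "tower_sum a n t = (\<Sum>q<h n t. a (rep n (t, q)))"

text \<open>The measure of the roof of the t-th tower; every level of the tower has this measure.\<close>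
definition mass :: "nat \<Rightarrow> nat \<Rightarrow> real" where
  "mass n t = (\<integral>x. indicator (B n t) x \<partial>\<mu>)"

lemma mass_nonneg: "mass n t \<ge> 0" unfolding mass_def by simp

lemma sum_atom_index: "(\<Sum>p\<in>atom_index n. g p) = (\<Sum>t\<in>{1..C n}. \<Sum>q<h n t. g (t, q))"
  unfolding atom_index_def by (subst sum.Sigma) auto

lemma tower_disintegration:
  assumes a: "atomic n (a :: 'a \<Rightarrow> real)" and bm: "b \<in> borel_measurable \<mu>" and bb: "\<And>x. \<bar>b x\<bar> \<le> c"
    and bs: "\<And>x. b ((T ^^ level n x) x) = b x"
  shows "(\<integral>x. a x * b x \<partial>\<mu>) = (\<Sum>t\<in>{1..C n}. tower_sum a n t * (\<integral>x. indicator (B n t) x * b x \<partial>\<mu>))"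
proof -
  have c0: "0 \<le> c" using bb[of undefined] by linarith
  have ii: "integrable \<mu> (\<lambda>x. indicator (lev n (fst p) (snd p)) x * b x)" if "p \<in> atom_index n" for p
  proof -
    have "lev n (fst p) (snd p) \<in> sets \<mu>" using lev_sets that by (cases p) (auto simp: atom_index_iff)
    then show ?thesis
      by (intro bounded_integrable[of _ c] borel_measurable_times borel_measurable_indicator bm)
        (use bb c0 in \<open>auto simp: indicator_def\<close>)
  qed
  \<comment> \<open>by invariance, the integral of b over the level q of tower t equals that over its roof\<close>
  have level_to_roof: "(\<integral>x. indicator (lev n t q) x * b x \<partial>\<mu>) = (\<integral>x. indicator (B n t) x * b x \<partial>\<mu>)"
    if tq: "(t, q) \<in> atom_index n" for t q
  proof -
    have t: "t \<in> {1..C n}" using tq by (simp add: atom_index_iff)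
    have "(\<integral>x. indicator (lev n t q) x * b x \<partial>\<mu>) = (\<integral>x. (\<lambda>y. indicator (B n t) y * b y) ((T ^^ q) x) \<partial>\<mu>)"
    proof (rule Bochner_Integration.integral_cong[OF refl])
      fix x
      show "indicator (lev n t q) x * b x = indicator (B n t) ((T ^^ q) x) * b ((T ^^ q) x)"
      proof (cases "x \<in> lev n t q")
        case True
        then have "level n x = q" using atom_ofI[OF tq] atom_of_split by auto
        then show ?thesis using True bs[of x] by (simp add: tlevel_def)
      qed (simp add: tlevel_def)
    qed
    also have "\<dots> = (\<integral>x. indicator (B n t) x * b x \<partial>\<mu>)"
      by (rule integral_Tpow, rule borel_measurable_times[OF borel_measurable_indicator[OF B_sets[OF t]] bm])
    finally show ?thesis .
  qed
  have "(\<integral>x. a x * b x \<partial>\<mu>) = (\<integral>x. (\<Sum>p\<in>atom_index n. a (rep n p) * (indicator (lev n (fst p) (snd p)) x * b x)) \<partial>\<mu>)"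
  proof (rule Bochner_Integration.integral_cong[OF refl])
    fix x
    have e: "a x = (\<Sum>p\<in>atom_index n. a (rep n p) * indicator (lev n (fst p) (snd p)) x)"
      by (rule atomic_expansion[OF a])
    show "a x * b x = (\<Sum>p\<in>atom_index n. a (rep n p) * (indicator (lev n (fst p) (snd p)) x * b x))"
      by (subst e) (simp add: sum_distrib_right mult.assoc)
  qed
  also have "\<dots> = (\<Sum>p\<in>atom_index n. a (rep n p) * (\<integral>x. indicator (lev n (fst p) (snd p)) x * b x \<partial>\<mu>))"
    using ii by (simp add: Bochner_Integration.integral_sum)
  also have "\<dots> = (\<Sum>t\<in>{1..C n}. \<Sum>q<h n t. a (rep n (t, q)) * (\<integral>x. indicator (B n t) x * b x \<partial>\<mu>))"
    unfolding sum_atom_index by (intro sum.cong refl) (simp add: level_to_roof atom_index_iff)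
  also have "\<dots> = (\<Sum>t\<in>{1..C n}. tower_sum a n t * (\<integral>x. indicator (B n t) x * b x \<partial>\<mu>))"
    unfolding tower_sum_def by (rule sum.cong[OF refl], rule sum_distrib_right[symmetric])
  finally show ?thesis .
qed

lemma tower_sum_one: "tower_sum (\<lambda>x. 1) n t = real (h n t)" unfolding tower_sum_def by simp

lemma integral_roof_invariant:
  assumes bm: "b \<in> borel_measurable \<mu>" and bb: "\<And>x. \<bar>b x\<bar> \<le> c"
    and bs: "\<And>x. b ((T ^^ level n x) x) = b x"
  shows "(\<integral>x. b x \<partial>\<mu>) = (\<Sum>t\<in>{1..C n}. real (h n t) * (\<integral>x. indicator (B n t) x * b x \<partial>\<mu>))"
  using tower_disintegration[of n "\<lambda>_. 1" b c, OF atomic_const bm bb bs] by (simp add: tower_sum_one)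

lemma masses_sum_one: "(\<Sum>t\<in>{1..C n}. real (h n t) * mass n t) = 1"
proof -
  have "(\<integral>x. 1 \<partial>\<mu>) = (\<Sum>t\<in>{1..C n}. real (h n t) * (\<integral>x. indicator (B n t) x * 1 \<partial>\<mu>))"
    by (rule integral_roof_invariant[of "\<lambda>x. 1" 1]) auto
  then show ?thesis unfolding mass_def integral_const by simp
qed

lemma level_mass: "k \<in> {1..C n} \<Longrightarrow> (\<integral>x. indicator (lev n k q) x \<partial>\<mu>) = mass n k"
proof -
  assume k: "k \<in> {1..C n}"
  have "(\<integral>x. indicator (lev n k q) x \<partial>\<mu>) = (\<integral>x. (indicator (B n k) :: 'a \<Rightarrow> real) ((T ^^ q) x) \<partial>\<mu>)"
    by (simp add: tlevel_def indicator_def)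
  also have "\<dots> = mass n k" unfolding mass_def by (rule integral_Tpow[OF borel_measurable_indicator[OF B_sets[OF k]]])
  finally show ?thesis .
qed

lemma s_eq: "KR_s T C B j t x = card {k. level j x < k \<and> k \<le> level (Suc j) x \<and> (T ^^ k) x \<in> B j t}"
  unfolding KR_s_def return_time_eq_level ..

lemma s_atomic: "t \<in> {1..C j} \<Longrightarrow> atomic (Suc j) (\<lambda>x. KR_s T C B j t x)"
  unfolding atomic_def
proof (intro allI impI)
  fix x y assume t: "t \<in> {1..C j}" and e: "atom_of (Suc j) x = atom_of (Suc j) y"
  have lj: "level j x = level j y" using atom_refines_Suc[OF e] unfolding level_def by simp
  have lS: "level (Suc j) x = level (Suc j) y" "tower (Suc j) x = tower (Suc j) y"
    using e unfolding level_def tower_def by simp_all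
  have "(T ^^ k) x \<in> B j t \<longleftrightarrow> (T ^^ k) y \<in> B j t" if k: "k \<le> level (Suc j) x" for k
  proof -
    have "atom_of (Suc j) ((T ^^ k) x) = atom_of (Suc j) ((T ^^ k) y)"
      using atom_of_shift[OF k] atom_of_shift[of k "Suc j" y] k lS by simp
    then have "atom_of j ((T ^^ k) x) = atom_of j ((T ^^ k) y)" by (rule atom_refines_Suc)
    then show ?thesis using roof_set_iff[OF t] by simp
  qed
  then have "{k. level j x < k \<and> k \<le> level (Suc j) x \<and> (T ^^ k) x \<in> B j t}
      = {k. level j y < k \<and> k \<le> level (Suc j) y \<and> (T ^^ k) y \<in> B j t}" using lj lS by auto
  then show "KR_s T C B j t x = KR_s T C B j t y" unfolding s_eq by simp
qed

lemma s_roof_invariant: "KR_s T C B j t ((T ^^ level j x) x) = KR_s T C B j t x"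
proof -
  let ?q = "level j x" and ?R = "level (Suc j) x"
  let ?y = "(T ^^ ?q) x"
  have q: "?q \<le> ?R" by (rule level_mono) simp
  have ly: "level j ?y = 0" using atom_of_shift[of ?q j x] atom_of_split by simp
  have lSy: "level (Suc j) ?y = ?R - ?q" using atom_of_shift[OF q] atom_of_split by simp
  have fa: "(T ^^ k) ?y = (T ^^ (k + ?q)) x" for k by (simp add: funpow_add)
  have "{k. ?q < k \<and> k \<le> ?R \<and> (T ^^ k) x \<in> B j t}
      = (\<lambda>k. k + ?q) ` {k. 0 < k \<and> k \<le> ?R - ?q \<and> (T ^^ k) ?y \<in> B j t}"
    (is "?Lx = _ ` ?Ly")
  proof (rule set_eqI, rule iffI)
    fix k assume "k \<in> ?Lx"
    then show "k \<in> (\<lambda>k. k + ?q) ` ?Ly" using fa[of "k - ?q"] by (intro image_eqI[of _ _ "k - ?q"]) auto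
  next
    fix k assume "k \<in> (\<lambda>k. k + ?q) ` ?Ly"
    then show "k \<in> ?Lx" using fa q by auto
  qed
  then have "card ?Lx = card ?Ly" by (simp add: card_image inj_on_def)
  then show ?thesis unfolding s_eq ly lSy by simp
qed

definition Mset :: "nat \<Rightarrow> nat \<Rightarrow> nat \<Rightarrow> nat set" where
  "Mset j l t = {Q. Q < h (Suc j) l \<and> lev (Suc j) l Q \<subseteq> B j t}"

lemma KR_M_card: "KR_M T h B (Suc j) l t = card (Mset j l t)" unfolding KR_M_def Mset_def by simp

lemma finite_Mset: "finite (Mset j l t)" unfolding Mset_def by auto

lemma s_le_M: "t \<in> {1..C j} \<Longrightarrow> KR_s T C B j t x \<le> card (Mset j (tower (Suc j) x) t)"
proof -
  assume t: "t \<in> {1..C j}"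
  let ?R = "level (Suc j) x" and ?l = "tower (Suc j) x"
  let ?S = "{k. level j x < k \<and> k \<le> ?R \<and> (T ^^ k) x \<in> B j t}"
  have "inj_on (\<lambda>k. ?R - k) ?S" by (auto simp: inj_on_def)
  moreover have "(\<lambda>k. ?R - k) ` ?S \<subseteq> Mset j ?l t"
  proof
    fix Q assume "Q \<in> (\<lambda>k. ?R - k) ` ?S"
    then obtain k where k: "k \<in> ?S" "Q = ?R - k" by blast
    have Qr: "Q < h (Suc j) ?l" using k level_range[of "Suc j" x] by auto
    have inA: "(?l, Q) \<in> atom_index (Suc j)" using Qr tower_range by (auto simp: atom_index_iff)
    have a1: "atom_of (Suc j) ((T ^^ k) x) = (?l, Q)" using atom_of_shift[of k "Suc j" x] k by auto
    have a2: "atom_of j ((T ^^ k) x) = (t, 0)" using k roof_set_iff[OF t] by auto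
    have "lev (Suc j) ?l Q \<subseteq> B j t"
    proof
      fix y assume "y \<in> lev (Suc j) ?l Q"
      then have "atom_of (Suc j) y = (?l, Q)" using atom_ofI[OF inA] by simp
      then have "atom_of j y = atom_of j ((T ^^ k) x)" using a1 atom_refines_Suc by metis
      then show "y \<in> B j t" using a2 roof_set_iff[OF t] by simp
    qed
    then show "Q \<in> Mset j ?l t" unfolding Mset_def using Qr by simp
  qed
  ultimately show ?thesis unfolding s_eq using card_inj_on_le finite_Mset by blast
qed

definition copy_point :: "nat \<Rightarrow> nat \<Rightarrow> nat \<Rightarrow> nat \<Rightarrow> 'a" where
  "copy_point j l Q q = (inv T ^^ q) (rep (Suc j) (l, Q))"

lemma copy_point_atoms:
  assumes l: "l \<in> {1..C (Suc j)}" and t: "t \<in> {1..C j}" and Q: "Q \<in> Mset j l t" and q: "q < h j t"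
  shows "atom_of j (copy_point j l Q q) = (t, q) \<and> atom_of (Suc j) (copy_point j l Q q) = (l, Q + q)"
proof -
  have QA: "(l, Q) \<in> atom_index (Suc j)" using Q l unfolding Mset_def by (auto simp: atom_index_iff)
  have r: "rep (Suc j) (l, Q) \<in> lev (Suc j) l Q"
    using atom_of_rep[OF QA] in_own_level[of "rep (Suc j) (l, Q)" "Suc j"] by (simp add: tower_def level_def)
  have rB: "rep (Suc j) (l, Q) \<in> B j t" using r Q unfolding Mset_def by auto
  let ?x = "copy_point j l Q q"
  have Tq: "(T ^^ q) ?x = rep (Suc j) (l, Q)" unfolding copy_point_def using Tpow_inv by simp
  have "?x \<in> lev j t q" using Tq rB by (simp add: tlevel_def)
  then have aj: "atom_of j ?x = (t, q)" using atom_ofI t q by (simp add: atom_index_iff)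
  have qle: "q \<le> level (Suc j) ?x" using level_mono[of j "Suc j" ?x] aj atom_of_split by auto
  have "atom_of (Suc j) ((T ^^ q) ?x) = (l, Q)" using Tq atom_of_rep[OF QA] by simp
  then have "(tower (Suc j) ?x, level (Suc j) ?x - q) = (l, Q)" using atom_of_shift[OF qle] by simp
  then have "atom_of (Suc j) ?x = (l, Q + q)" using qle atom_of_split by auto
  then show ?thesis using aj by simp
qed

text \<open>The (j+1)-tower l contains, for every Q in Mset j l t, a full copy of the j-tower t;
  these copies are disjoint, so h(j+1,l) \<ge> \<Sum>_t M(j+1)_{l,t} h(j,t).\<close>
lemma tower_height_ge_blocks: assumes l: "l \<in> {1..C (Suc j)}"
  shows "(\<Sum>t\<in>{1..C j}. card (Mset j l t) * h j t) \<le> h (Suc j) l"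
proof -
  define pt where "pt = (\<lambda>(t::nat, Q, q). copy_point j l Q q)"
  define S where "S = (SIGMA t:{1..C j}. Mset j l t \<times> {..<h j t})"
  have key: "atom_of j (pt (t, Q, q)) = (t, q) \<and> atom_of (Suc j) (pt (t, Q, q)) = (l, Q + q)"
    if "(t, Q, q) \<in> S" for t Q q
    using that copy_point_atoms[OF l] unfolding S_def pt_def by auto
  have inj: "inj_on (\<lambda>(t, Q, q). Q + q) S"
  proof (rule inj_onI)
    fix a b assume a: "a \<in> S" and b: "b \<in> S" and e: "(\<lambda>(t, Q, q). Q + q) a = (\<lambda>(t, Q, q). Q + q) b"
    obtain t Q q where ta: "a = (t, Q, q)" by (cases a) auto
    obtain t' Q' q' where tb: "b = (t', Q', q')" by (cases b) auto
    have "atom_of (Suc j) (pt a) = atom_of (Suc j) (pt b)" using key a b e ta tb by auto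
    then have "atom_of j (pt a) = atom_of j (pt b)" by (rule atom_refines_Suc)
    then have "t = t' \<and> q = q'" using key a b ta tb by auto
    then show "a = b" using e ta tb by auto
  qed
  have sub: "(\<lambda>(t, Q, q). Q + q) ` S \<subseteq> {..<h (Suc j) l}"
  proof
    fix z assume "z \<in> (\<lambda>(t, Q, q). Q + q) ` S"
    then obtain t Q q where a: "(t, Q, q) \<in> S" "z = Q + q" by auto
    have "atom_of (Suc j) (pt (t, Q, q)) = (l, Q + q)" using key[OF a(1)] by simp
    then show "z \<in> {..<h (Suc j) l}" using a level_range[of "Suc j" "pt (t, Q, q)"] atom_of_split by auto
  qed
  have "card S = (\<Sum>t\<in>{1..C j}. card (Mset j l t) * h j t)"
    unfolding S_def using finite_Mset by (simp add: card_SigmaI card_cartesian_product)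
  moreover have "card S \<le> h (Suc j) l"
    using card_inj_on_le[OF inj sub] by simp
  ultimately show ?thesis by simp
qed

text \<open>Linear recurrence bounds the row sums of M(j+1) by L.\<close>
lemma row_sum_M_le_L: assumes l: "l \<in> {1..C (Suc j)}"
  shows "(\<Sum>t\<in>{1..C j}. real (card (Mset j l t))) \<le> L"
proof -
  obtain t0 where t0: "t0 \<in> {1..C j}" "h j t0 = Min (h j ` {1..C j})"
    using Min_in[of "h j ` {1..C j}"] C_pos[of j] by fastforce
  have mn: "h j t0 \<le> h j t" if "t \<in> {1..C j}" for t using t0 that by simp
  have h0: "real (h j t0) \<ge> 1" using h_pos[OF t0(1)] by simp
  have "(\<Sum>t\<in>{1..C j}. real (card (Mset j l t))) * real (h j t0)
      \<le> (\<Sum>t\<in>{1..C j}. real (card (Mset j l t)) * real (h j t))"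
    unfolding sum_distrib_right by (rule sum_mono) (use mn in \<open>simp add: mult_left_mono\<close>)
  also have "\<dots> \<le> real (h (Suc j) l)" using tower_height_ge_blocks[OF l] by (simp flip: of_nat_mult of_nat_sum)
  also have "\<dots> \<le> L * real (h j t0)" using LR[of "Suc j" l t0] l t0 by simp
  finally show ?thesis using h0 by (simp add: mult_le_cancel_right)
qed

abbreviation Pnorm :: "(nat \<Rightarrow> real) \<Rightarrow> nat \<Rightarrow> real" where
  "Pnorm v j \<equiv> KR_Pv_norm T C h B v j"

lemma Pv_le_Pnorm: "t \<in> {1..C j} \<Longrightarrow> \<bar>KR_Pv T C h B v j t\<bar> \<le> Pnorm v j"
  unfolding KR_Pv_norm_def by (rule Max_ge) auto

lemma Pnorm_nonneg: "Pnorm v j \<ge> 0"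
  using Pv_le_Pnorm[of 1 j v] C_pos[of j] by (meson abs_ge_zero atLeastAtMost_iff order_trans order_refl)

definition incr :: "(nat \<Rightarrow> real) \<Rightarrow> nat \<Rightarrow> 'a \<Rightarrow> real" where
  "incr v j x = (\<Sum>t\<in>{1..C j}. real (KR_s T C B j t x) * KR_Pv T C h B v j t)"

lemma g_eq_sum_incr: "KR_g T C h B v n x = (\<Sum>j\<in>{1..<n}. incr v j x)"
  unfolding KR_g_def incr_def ..

lemma incr_atomic: "atomic (Suc j) (incr v j)"
  using s_atomic unfolding atomic_def incr_def by (metis (no_types, lifting) sum.cong)

lemma incr_roof_invariant: "incr v j ((T ^^ level j x) x) = incr v j x"
  unfolding incr_def s_roof_invariant ..

lemma incr_bound: "\<bar>incr v j x\<bar> \<le> L * Pnorm v j"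
proof -
  let ?l = "tower (Suc j) x"
  have "\<bar>incr v j x\<bar> \<le> (\<Sum>t\<in>{1..C j}. real (KR_s T C B j t x) * \<bar>KR_Pv T C h B v j t\<bar>)"
    unfolding incr_def by (rule order_trans[OF sum_abs]) (simp add: abs_mult)
  also have "\<dots> \<le> (\<Sum>t\<in>{1..C j}. real (card (Mset j ?l t)) * Pnorm v j)"
    by (intro sum_mono mult_mono) (use s_le_M Pv_le_Pnorm Pnorm_nonneg in auto)
  also have "\<dots> = (\<Sum>t\<in>{1..C j}. real (card (Mset j ?l t))) * Pnorm v j"
    by (simp add: sum_distrib_right)
  also have "\<dots> \<le> L * Pnorm v j"
    using row_sum_M_le_L[OF tower_range] Pnorm_nonneg by (intro mult_right_mono) auto
  finally show ?thesis .
qed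

definition cincr :: "(nat \<Rightarrow> real) \<Rightarrow> nat \<Rightarrow> 'a \<Rightarrow> real" where
  "cincr v j x = incr v j x - (\<integral>y. incr v j y \<partial>\<mu>)"

lemma cincr_atomic: "atomic (Suc j) (cincr v j)"
  unfolding cincr_def by (rule atomic_comp[OF incr_atomic])

lemma cincr_roof_invariant: "cincr v j ((T ^^ level j x) x) = cincr v j x"
  unfolding cincr_def incr_roof_invariant ..

lemma cincr_bound: "\<bar>cincr v j x\<bar> \<le> 2 * L * Pnorm v j"
proof -
  have "(\<integral>y. incr v j y \<partial>\<mu>) \<le> L * Pnorm v j"
    by (rule integral_atomic_le[OF incr_atomic]) (use incr_bound in \<open>simp add: abs_le_iff\<close>)
  moreover have "(\<integral>y. - incr v j y \<partial>\<mu>) \<le> L * Pnorm v j"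
    by (rule integral_atomic_le[OF atomic_comp[OF incr_atomic]]) (use incr_bound in \<open>simp add: abs_le_iff\<close>)
  ultimately show ?thesis using incr_bound[of v j x] unfolding cincr_def by (simp add: abs_le_iff)
qed

lemma integral_cincr: "(\<integral>x. cincr v j x \<partial>\<mu>) = 0"
proof -
  have "(\<integral>x. cincr v j x \<partial>\<mu>) = (\<integral>x. incr v j x \<partial>\<mu>) - (\<integral>x. (\<integral>y. incr v j y \<partial>\<mu>) \<partial>\<mu>)"
    unfolding cincr_def
    by (rule Bochner_Integration.integral_diff[OF atomic_integrable[OF incr_atomic] atomic_integrable[OF atomic_const]])
  then show ?thesis by (simp only: integral_const)
qed

subsection \<open>Tower averages and their contraction\<close>

definition in_tower :: "nat \<Rightarrow> nat \<Rightarrow> 'a \<Rightarrow> real" where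
  "in_tower j l x = (if tower (Suc j) x = l then 1 else 0)"

definition joint_mass :: "nat \<Rightarrow> nat \<Rightarrow> nat \<Rightarrow> real" where
  "joint_mass j l t = (\<integral>x. indicator (B j t) x * in_tower j l x \<partial>\<mu>)"

lemma in_tower_atomic: "atomic (Suc j) (in_tower j l)"
  unfolding atomic_def in_tower_def tower_def by auto

lemma in_tower_measurable: "in_tower j l \<in> borel_measurable \<mu>"
  by (rule atomic_measurable[OF in_tower_atomic])

lemma in_tower_bound: "\<bar>in_tower j l x\<bar> \<le> 1" unfolding in_tower_def by simp

lemma in_tower_shift: "i \<le> level (Suc j) x \<Longrightarrow> in_tower j l ((T ^^ i) x) = in_tower j l x"
proof -
  assume "i \<le> level (Suc j) x"
  then have "tower (Suc j) ((T ^^ i) x) = tower (Suc j) x" using atom_of_shift unfolding tower_def by simp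
  then show ?thesis unfolding in_tower_def by simp
qed

lemma integrable_roof_times:
  assumes t: "t \<in> {1..C j}" and f: "atomic n (f :: 'a \<Rightarrow> real)"
  shows "integrable \<mu> (\<lambda>x. indicator (B j t) x * f x)"
proof -
  have "atomic (j + n) (\<lambda>x. indicator (B j t) x * f x)"
    by (rule atomic_comp2'[OF atomic_indicator_roof[OF t] f])
  then show ?thesis by (rule atomic_integrable)
qed

text \<open>Computing the integral of a j-atomic a over the (j+1)-tower l once with the towers of
  level j + 1 and once with those of level j shows how tower sums are refined.\<close>
lemma tower_sum_refine:
  assumes a: "atomic j a" and l: "l \<in> {1..C (Suc j)}"
  shows "tower_sum a (Suc j) l * mass (Suc j) l = (\<Sum>t\<in>{1..C j}. tower_sum a j t * joint_mass j l t)"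
proof -
  have "(\<integral>x. a x * in_tower j l x \<partial>\<mu>) = (\<Sum>t\<in>{1..C j}. tower_sum a j t * joint_mass j l t)"
    unfolding joint_mass_def
    by (rule tower_disintegration[of j a "in_tower j l" 1, OF a in_tower_measurable in_tower_bound])
      (simp add: in_tower_shift level_mono)
  moreover have "(\<integral>x. a x * in_tower j l x \<partial>\<mu>) = tower_sum a (Suc j) l * mass (Suc j) l"
  proof -
    have "(\<integral>x. a x * in_tower j l x \<partial>\<mu>) = (\<Sum>l'\<in>{1..C (Suc j)}.
        tower_sum a (Suc j) l' * (\<integral>x. indicator (B (Suc j) l') x * in_tower j l x \<partial>\<mu>))"
      by (rule tower_disintegration[of "Suc j" a "in_tower j l" 1, OF atomic_mono[OF _ a] in_tower_measurable in_tower_bound])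
        (simp_all add: in_tower_shift)
    also have "\<dots> = (\<Sum>l'\<in>{1..C (Suc j)}. if l' = l then tower_sum a (Suc j) l * mass (Suc j) l else 0)"
    proof (rule sum.cong[OF refl])
      fix l' assume l': "l' \<in> {1..C (Suc j)}"
      have "indicator (B (Suc j) l') x * in_tower j l x = (if l' = l then indicator (B (Suc j) l') x else 0)" for x
      proof (cases "x \<in> B (Suc j) l'")
        case True
        then have "tower (Suc j) x = l'" using roof_set_iff[OF l'] by (simp add: tower_def)
        then show ?thesis using True unfolding in_tower_def by auto
      qed (auto simp: indicator_def)
      then show "tower_sum a (Suc j) l' * (\<integral>x. indicator (B (Suc j) l') x * in_tower j l x \<partial>\<mu>) =
          (if l' = l then tower_sum a (Suc j) l * mass (Suc j) l else 0)" unfolding mass_def by simp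
    qed
    also have "\<dots> = tower_sum a (Suc j) l * mass (Suc j) l" using l by (simp add: sum.delta)
    finally show ?thesis .
  qed
  ultimately show ?thesis by simp
qed

lemma joint_mass_le: assumes t: "t \<in> {1..C j}" shows "joint_mass j l t \<le> mass j t"
  unfolding joint_mass_def mass_def
proof (rule integral_mono)
  show "integrable \<mu> (\<lambda>x. indicator (B j t) x * in_tower j l x)"
    by (rule integrable_roof_times[OF t in_tower_atomic])
  show "integrable \<mu> (\<lambda>x. indicator (B j t) x :: real)"
    using integrable_roof_times[OF t atomic_const[of 0 1]] by simp
  show "indicator (B j t) x * in_tower j l x \<le> indicator (B j t) x" for x
    by (simp add: in_tower_def indicator_def)
qed

text \<open>Since M(j+1)_{l,t} \<ge> 2, at least two levels of the (j+1)-tower l lie in B_t(j).\<close>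
lemma joint_mass_ge: assumes j: "j \<ge> 1" and l: "l \<in> {1..C (Suc j)}" and t: "t \<in> {1..C j}"
  shows "joint_mass j l t \<ge> 2 * mass (Suc j) l"
proof -
  have "card (Mset j l t) \<ge> 2" using M_ge2[of "Suc j" l t] j l t KR_M_card by simp
  then obtain Q1 Q2 where Q: "Q1 \<in> Mset j l t" "Q2 \<in> Mset j l t" "Q1 \<noteq> Q2"
    by (metis One_nat_def card_le_Suc_iff numeral_2_eq_2 insertCI)
  have inA: "(l, Q) \<in> atom_index (Suc j)" if "Q \<in> Mset j l t" for Q
    using that l unfolding Mset_def by (auto simp: atom_index_iff)
  have pw: "indicator (lev (Suc j) l Q1) x + indicator (lev (Suc j) l Q2) x \<le> indicator (B j t) x * in_tower j l x" for x
  proof (cases "x \<in> lev (Suc j) l Q1 \<or> x \<in> lev (Suc j) l Q2")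
    case True
    then obtain Q where Q': "Q \<in> Mset j l t" "x \<in> lev (Suc j) l Q" using Q by auto
    have a: "atom_of (Suc j) x = (l, Q)" using atom_ofI[OF inA[OF Q'(1)] Q'(2)] .
    have "x \<in> B j t" using Q' unfolding Mset_def by auto
    moreover have "in_tower j l x = 1" using a unfolding in_tower_def tower_def by simp
    moreover have "\<not> (x \<in> lev (Suc j) l Q1 \<and> x \<in> lev (Suc j) l Q2)"
      using atom_ofI[OF inA[OF Q(1)]] atom_ofI[OF inA[OF Q(2)]] Q(3) by (metis prod.inject)
    ultimately show ?thesis by (auto simp: indicator_def)
  next
    case False then show ?thesis unfolding in_tower_def by (simp add: indicator_def)
  qed
  have int_lev: "integrable \<mu> (\<lambda>x. indicator (lev (Suc j) l Q) x :: real)" for Q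
    by (rule bounded_integrable[OF borel_measurable_indicator[OF lev_sets[OF l]], of _ 1])
      (simp add: indicator_def)
  have "2 * mass (Suc j) l = (\<integral>x. indicator (lev (Suc j) l Q1) x + indicator (lev (Suc j) l Q2) x \<partial>\<mu>)"
    using level_mass[OF l, of Q1] level_mass[OF l, of Q2] int_lev by simp
  also have "\<dots> \<le> joint_mass j l t" unfolding joint_mass_def
    by (rule integral_mono[OF _ integrable_roof_times[OF t in_tower_atomic] pw]) (use int_lev in simp)
  finally show ?thesis .
qed

definition tower_avg :: "('a \<Rightarrow> real) \<Rightarrow> nat \<Rightarrow> nat \<Rightarrow> real" where
  "tower_avg a j t = tower_sum a j t / real (h j t)"

definition weight :: "nat \<Rightarrow> nat \<Rightarrow> nat \<Rightarrow> real" where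
  "weight j l t = real (h j t) * joint_mass j l t / (real (h (Suc j) l) * mass (Suc j) l)"

lemma tower_avg_recursion:
  assumes a: "atomic j a" and l: "l \<in> {1..C (Suc j)}" and mp: "mass (Suc j) l > 0"
  shows "tower_avg a (Suc j) l = (\<Sum>t\<in>{1..C j}. weight j l t * tower_avg a j t)"
proof -
  have "tower_avg a (Suc j) l = tower_sum a (Suc j) l * mass (Suc j) l / (real (h (Suc j) l) * mass (Suc j) l)"
    unfolding tower_avg_def using mp by simp
  also have "\<dots> = (\<Sum>t\<in>{1..C j}. tower_sum a j t * joint_mass j l t / (real (h (Suc j) l) * mass (Suc j) l))"
    unfolding tower_sum_refine[OF a l] by (simp add: sum_divide_distrib)
  also have "\<dots> = (\<Sum>t\<in>{1..C j}. weight j l t * tower_avg a j t)"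
  proof (rule sum.cong[OF refl])
    fix t assume t: "t \<in> {1..C j}"
    have "real (h j t) > 0" using h_pos[OF t] by simp
    then show "tower_sum a j t * joint_mass j l t / (real (h (Suc j) l) * mass (Suc j) l)
        = weight j l t * tower_avg a j t"
      unfolding weight_def tower_avg_def by (simp add: field_simps)
  qed
  finally show ?thesis .
qed

lemma weight_sum: assumes l: "l \<in> {1..C (Suc j)}" and mp: "mass (Suc j) l > 0"
  shows "(\<Sum>t\<in>{1..C j}. weight j l t) = 1"
proof -
  have "(\<Sum>t\<in>{1..C j}. real (h j t) * joint_mass j l t) = real (h (Suc j) l) * mass (Suc j) l"
    using tower_sum_refine[OF atomic_const l, of 1] by (simp add: tower_sum_one)
  then show ?thesis unfolding weight_def sum_divide_distrib[symmetric] using h_pos[OF l] mp by simp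
qed

text \<open>All weights are at least 2/L: this combines M \<ge> 2 with linear recurrence.\<close>
lemma weight_ge: assumes j: "j \<ge> 1" and l: "l \<in> {1..C (Suc j)}" and t: "t \<in> {1..C j}"
    and mp: "mass (Suc j) l > 0"
  shows "weight j l t \<ge> 2 / L"
proof -
  have H: "real (h (Suc j) l) > 0" using h_pos[OF l] by simp
  have ht: "real (h j t) > 0" using h_pos[OF t] by simp
  have "2 / L \<le> 2 * real (h j t) / real (h (Suc j) l)"
    using LR[of "Suc j" l t] l t L_ge2 H ht by (simp add: field_simps)
  also have "\<dots> = real (h j t) * (2 * mass (Suc j) l) / (real (h (Suc j) l) * mass (Suc j) l)"
    using mp by (simp add: field_simps)
  also have "\<dots> \<le> weight j l t" unfolding weight_def
    using joint_mass_ge[OF j l t] H ht mp by (intro divide_right_mono mult_left_mono) auto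
  finally show ?thesis .
qed

lemma mass_pos_descends: assumes j: "j \<ge> 1" and l: "l \<in> {1..C (Suc j)}" and t: "t \<in> {1..C j}"
    and mp: "mass (Suc j) l > 0"
  shows "mass j t > 0"
  using joint_mass_ge[OF j l t] joint_mass_le[OF t, of l] mp by linarith

definition osc_le :: "('a \<Rightarrow> real) \<Rightarrow> nat \<Rightarrow> real \<Rightarrow> bool" where
  "osc_le a j R \<longleftrightarrow> (\<forall>t\<in>{1..C j}. \<forall>t'\<in>{1..C j}. mass j t > 0 \<longrightarrow> mass j t' > 0 \<longrightarrow>
     \<bar>tower_avg a j t - tower_avg a j t'\<bar> \<le> R)"

lemma osc_contracts: assumes a: "atomic j a" and j: "j \<ge> 1" and O: "osc_le a j R"
  shows "osc_le a (Suc j) ((1 - 2 / L) * R)"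
  unfolding osc_le_def
proof (intro ballI impI)
  fix l l' assume l: "l \<in> {1..C (Suc j)}" and l': "l' \<in> {1..C (Suc j)}"
    and mp: "mass (Suc j) l > 0" and mp': "mass (Suc j) l' > 0"
  have allpos: "\<forall>t\<in>{1..C j}. mass j t > 0" using mass_pos_descends[OF j l _ mp] by blast
  have L0: "0 \<le> 2 / L" using L_ge2 by simp
  show "\<bar>tower_avg a (Suc j) l - tower_avg a (Suc j) l'\<bar> \<le> (1 - 2 / L) * R"
    unfolding tower_avg_recursion[OF a l mp] tower_avg_recursion[OF a l' mp']
  proof (rule weighted_averages_contract)
    show "\<forall>t\<in>{1..C j}. 0 \<le> weight j l t" using weight_ge[OF j l _ mp] L0 by (meson order_trans)
    show "\<forall>t\<in>{1..C j}. 2 / L \<le> weight j l' t" using weight_ge[OF j l' _ mp'] by blast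
    show "\<forall>t\<in>{1..C j}. \<forall>t'\<in>{1..C j}. \<bar>tower_avg a j t - tower_avg a j t'\<bar> \<le> R"
      using O allpos unfolding osc_le_def by blast
  qed (use weight_sum[OF l mp] weight_sum[OF l' mp'] L0 in auto)
qed

subsection \<open>Decay of correlations\<close>

lemma exists_positive_mass: "\<exists>t0\<in>{1..C j}. mass j t0 > 0"
proof (rule ccontr)
  assume "\<not> ?thesis"
  then have "\<forall>t\<in>{1..C j}. mass j t = 0" using mass_nonneg by (meson not_le order_antisym)
  then show False using masses_sum_one[of j] by simp
qed

lemma roof_integral_bound:
  assumes t: "t \<in> {1..C j}" and b: "atomic n b" and bb: "\<And>x. \<bar>b x\<bar> \<le> P"
  shows "\<bar>\<integral>x. indicator (B j t) x * b x \<partial>\<mu>\<bar> \<le> P * mass j t"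
proof -
  have pw: "indicator (B j t) x * (- P) \<le> indicator (B j t) x * b x"
    "indicator (B j t) x * b x \<le> indicator (B j t) x * P" for x
    using bb[of x] by (simp_all add: indicator_def abs_le_iff)
  have "(\<integral>x. indicator (B j t) x * b x \<partial>\<mu>) \<le> (\<integral>x. indicator (B j t) x * P \<partial>\<mu>)"
    by (intro integral_mono integrable_roof_times[OF t b] integrable_roof_times[OF t atomic_const] pw)
  moreover have "(\<integral>x. indicator (B j t) x * (- P) \<partial>\<mu>) \<le> (\<integral>x. indicator (B j t) x * b x \<partial>\<mu>)"
    by (intro integral_mono integrable_roof_times[OF t b] integrable_roof_times[OF t atomic_const] pw)
  ultimately show ?thesis unfolding mass_def by (simp add: abs_le_iff mult.commute)
qed

lemma integral_against_centred_eq: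
  assumes a: "atomic j a" and b: "atomic n b" and bb: "\<And>x. \<bar>b x\<bar> \<le> P"
    and bs: "\<And>x. b ((T ^^ level j x) x) = b x" and b0: "(\<integral>x. b x \<partial>\<mu>) = 0"
  shows "(\<integral>x. a x * b x \<partial>\<mu>) = (\<Sum>t\<in>{1..C j}. real (h j t) * (\<integral>x. indicator (B j t) x * b x \<partial>\<mu>)
           * (tower_avg a j t - tower_avg a j t0))"
proof -
  define \<beta> where "\<beta> t = (\<integral>x. indicator (B j t) x * b x \<partial>\<mu>)" for t
  have bm: "b \<in> borel_measurable \<mu>" by (rule atomic_measurable[OF b])
  have sum0: "(\<Sum>t\<in>{1..C j}. real (h j t) * \<beta> t) = 0"
    using integral_roof_invariant[of b P j, OF bm bb bs] b0 unfolding \<beta>_def by simp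
  have "real (h j t) * \<beta> t * tower_avg a j t = tower_sum a j t * \<beta> t" if "t \<in> {1..C j}" for t
    using h_pos[OF that] by (simp add: tower_avg_def)
  then have "(\<Sum>t\<in>{1..C j}. real (h j t) * \<beta> t * tower_avg a j t) = (\<Sum>t\<in>{1..C j}. tower_sum a j t * \<beta> t)"
    by (rule sum.cong[OF refl])
  also have "\<dots> = (\<integral>x. a x * b x \<partial>\<mu>)"
    unfolding \<beta>_def by (rule tower_disintegration[of j a b P, OF a bm bb bs, symmetric])
  finally have "(\<integral>x. a x * b x \<partial>\<mu>) = (\<Sum>t\<in>{1..C j}. real (h j t) * \<beta> t * tower_avg a j t)
      - (\<Sum>t\<in>{1..C j}. real (h j t) * \<beta> t) * tower_avg a j t0"
    unfolding sum0 by simp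
  then show ?thesis unfolding \<beta>_def[symmetric]
    by (simp add: right_diff_distrib sum_subtractf sum_distrib_right)
qed

lemma integral_against_centred:
  assumes a: "atomic j a" and O: "osc_le a j R" and R0: "0 \<le> R"
    and b: "atomic n b" and bb: "\<And>x. \<bar>b x\<bar> \<le> P" and bs: "\<And>x. b ((T ^^ level j x) x) = b x"
    and b0: "(\<integral>x. b x \<partial>\<mu>) = 0"
  shows "\<bar>\<integral>x. a x * b x \<partial>\<mu>\<bar> \<le> P * R"
proof -
  define \<beta> where "\<beta> t = (\<integral>x. indicator (B j t) x * b x \<partial>\<mu>)" for t
  obtain t0 where t0: "t0 \<in> {1..C j}" "mass j t0 > 0" using exists_positive_mass by blast
  have P0: "0 \<le> P" using bb[of undefined] by linarith
  have "\<bar>\<Sum>t\<in>{1..C j}. real (h j t) * \<beta> t * (tower_avg a j t - tower_avg a j t0)\<bar>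
      \<le> (\<Sum>t\<in>{1..C j}. real (h j t) * (P * mass j t) * R)"
  proof (rule order_trans[OF sum_abs sum_mono])
    fix t assume t: "t \<in> {1..C j}"
    have bt: "\<bar>\<beta> t\<bar> \<le> P * mass j t" unfolding \<beta>_def by (rule roof_integral_bound[OF t b bb])
    show "\<bar>real (h j t) * \<beta> t * (tower_avg a j t - tower_avg a j t0)\<bar> \<le> real (h j t) * (P * mass j t) * R"
    proof (cases "mass j t > 0")
      case True
      then have "\<bar>tower_avg a j t - tower_avg a j t0\<bar> \<le> R" using O t t0 unfolding osc_le_def by blast
      then show ?thesis using bt R0 by (simp add: abs_mult mult_mono)
    next
      case False
      then have "\<beta> t = 0" using bt mass_nonneg[of j t] P0 by (simp add: mult_nonpos_nonneg)
      then show ?thesis using R0 P0 mass_nonneg[of j t] by simp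
    qed
  qed
  also have "\<dots> = (\<Sum>t\<in>{1..C j}. (P * R) * (real (h j t) * mass j t))"
    by (rule sum.cong[OF refl]) simp
  also have "\<dots> = P * R * (\<Sum>t\<in>{1..C j}. real (h j t) * mass j t)"
    by (rule sum_distrib_left[symmetric])
  finally show ?thesis
    unfolding integral_against_centred_eq[OF a b bb bs b0, of t0] \<beta>_def masses_sum_one by simp
qed

definition \<theta> :: real where "\<theta> = 1 - 2 / L"

lemma \<theta>_range: "0 \<le> \<theta>" "\<theta> < 1" unfolding \<theta>_def using L_ge2 by (auto simp: field_simps)

lemma tower_avg_bound: assumes b: "\<And>x. \<bar>a x\<bar> \<le> K" and t: "t \<in> {1..C j}"
  shows "\<bar>tower_avg a j t\<bar> \<le> K"
proof -
  have ht: "real (h j t) > 0" using h_pos[OF t] by simp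
  have "\<bar>tower_sum a j t\<bar> \<le> (\<Sum>q<h j t. K)" unfolding tower_sum_def by (rule order_trans[OF sum_abs sum_mono[OF b]])
  then have "\<bar>tower_sum a j t\<bar> / real (h j t) \<le> K" using ht by (simp add: pos_divide_le_eq mult.commute)
  moreover have "\<bar>tower_avg a j t\<bar> = \<bar>tower_sum a j t\<bar> / real (h j t)" unfolding tower_avg_def using ht by simp
  ultimately show ?thesis by simp
qed

lemma osc_incr: "osc_le (incr v i) (Suc i + k) (\<theta> ^ k * (2 * L * Pnorm v i))"
proof (induction k)
  case 0
  have bound: "\<bar>tower_avg (incr v i) (Suc i) t\<bar> \<le> L * Pnorm v i" if "t \<in> {1..C (Suc i)}" for t
    by (rule tower_avg_bound[where a = "incr v i", OF incr_bound that])
  show ?case unfolding osc_le_def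
  proof (intro ballI impI)
    fix t t' assume "t \<in> {1..C (Suc i + 0)}" "t' \<in> {1..C (Suc i + 0)}"
    then have "\<bar>tower_avg (incr v i) (Suc i) t\<bar> \<le> L * Pnorm v i" "\<bar>tower_avg (incr v i) (Suc i) t'\<bar> \<le> L * Pnorm v i"
      using bound by simp_all
    then show "\<bar>tower_avg (incr v i) (Suc i + 0) t - tower_avg (incr v i) (Suc i + 0) t'\<bar> \<le> \<theta> ^ 0 * (2 * L * Pnorm v i)"
      by simp
  qed
next
  case (Suc k)
  have "osc_le (incr v i) (Suc (Suc i + k)) ((1 - 2 / L) * (\<theta> ^ k * (2 * L * Pnorm v i)))"
    by (rule osc_contracts[OF atomic_mono[OF _ incr_atomic] _ Suc]) simp_all
  then show ?case by (simp add: \<theta>_def mult.assoc)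
qed

lemma decorrelation: assumes j: "j = Suc i + k"
  shows "\<bar>\<integral>x. cincr v i x * cincr v j x \<partial>\<mu>\<bar> \<le> \<theta> ^ k * (2 * L * Pnorm v i) * (2 * L * Pnorm v j)"
proof -
  have ii: "integrable \<mu> (cincr v j)" by (rule atomic_integrable[OF cincr_atomic])
  have "(\<integral>x. cincr v i x * cincr v j x \<partial>\<mu>) = (\<integral>x. incr v i x * cincr v j x - (\<integral>y. incr v i y \<partial>\<mu>) * cincr v j x \<partial>\<mu>)"
    unfolding cincr_def[of v i] by (simp add: left_diff_distrib)
  also have "\<dots> = (\<integral>x. incr v i x * cincr v j x \<partial>\<mu>)"
    using atomic_integrable[OF atomic_comp2'[OF incr_atomic cincr_atomic, where k = "(*)"]] ii
    by (simp add: integral_cincr)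
  finally have "\<bar>\<integral>x. cincr v i x * cincr v j x \<partial>\<mu>\<bar> = \<bar>\<integral>x. incr v i x * cincr v j x \<partial>\<mu>\<bar>" by simp
  also have "\<dots> \<le> (2 * L * Pnorm v j) * (\<theta> ^ k * (2 * L * Pnorm v i))"
    using j osc_incr[of v i k] \<theta>_range L_ge2 Pnorm_nonneg[of v i]
    by (intro integral_against_centred[OF atomic_mono[OF _ incr_atomic] _ _ cincr_atomic cincr_bound
        cincr_roof_invariant integral_cincr]) simp_all
  finally show ?thesis by (simp add: mult_ac)
qed

definition \<rho> :: real where "\<rho> = max \<theta> (1/2)"
definition K_cov :: real where "K_cov = 8 * L * L"

lemma \<rho>_range: "0 \<le> \<rho>" "\<rho> < 1" "\<theta> \<le> \<rho>" "1/2 \<le> \<rho>" unfolding \<rho>_def using \<theta>_range by auto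

lemma variance_cincr: "\<bar>\<integral>x. cincr v j x * cincr v j x \<partial>\<mu>\<bar> \<le> (2 * L * Pnorm v j) * (2 * L * Pnorm v j)"
proof -
  have "(\<integral>x. cincr v j x * cincr v j x \<partial>\<mu>) \<le> (2 * L * Pnorm v j) * (2 * L * Pnorm v j)"
  proof (rule integral_atomic_le[OF atomic_comp2[OF cincr_atomic cincr_atomic]])
    fix x
    have "\<bar>cincr v j x\<bar> * \<bar>cincr v j x\<bar> \<le> (2 * L * Pnorm v j) * (2 * L * Pnorm v j)"
      using cincr_bound[of v j x] by (intro mult_mono) auto
    then show "cincr v j x * cincr v j x \<le> (2 * L * Pnorm v j) * (2 * L * Pnorm v j)" by (simp add: abs_mult[symmetric])
  qed
  moreover have "0 \<le> (\<integral>x. cincr v j x * cincr v j x \<partial>\<mu>)" by (rule integral_nonneg_AE) simp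
  ultimately show ?thesis by simp
qed

lemma covariance_bound:
  "\<bar>\<integral>x. cincr v i x * cincr v j x \<partial>\<mu>\<bar> \<le> K_cov * \<rho> ^ gap i j * Pnorm v i * Pnorm v j"
proof -
  have L0: "L > 0" using L_ge2 by simp
  have ordered: "\<bar>\<integral>x. cincr v a x * cincr v b x \<partial>\<mu>\<bar> \<le> K_cov * \<rho> ^ gap a b * Pnorm v a * Pnorm v b"
    if ab: "a < b" for a b
  proof -
    define k where "k = b - Suc a"
    have b: "b = Suc a + k" using ab unfolding k_def by simp
    have "\<theta> ^ k \<le> 2 * \<rho> ^ Suc k"
    proof -
      have "\<theta> ^ k \<le> \<rho> ^ k" using \<rho>_range \<theta>_range by (intro power_mono) auto
      also have "\<dots> \<le> 2 * \<rho> ^ Suc k" using \<rho>_range by (simp add: mult_left_mono[of "1" "2 * \<rho>"])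
      finally show ?thesis .
    qed
    then have "\<theta> ^ k * (2 * L * Pnorm v a) * (2 * L * Pnorm v b) \<le> (2 * \<rho> ^ Suc k) * (2 * L * Pnorm v a) * (2 * L * Pnorm v b)"
      using L0 Pnorm_nonneg[of v a] Pnorm_nonneg[of v b] by (intro mult_right_mono) auto
    also have "\<dots> = K_cov * \<rho> ^ gap a b * Pnorm v a * Pnorm v b" unfolding K_cov_def gap_def using b by simp
    finally show ?thesis using decorrelation[OF b, of v] by linarith
  qed
  show ?thesis
  proof (cases i j rule: linorder_cases)
    case less then show ?thesis using ordered by blast
  next
    case equal
    have "0 \<le> L * L * Pnorm v j * Pnorm v j" using L0 Pnorm_nonneg[of v j] by simp
    then have "(2 * L * Pnorm v j) * (2 * L * Pnorm v j) \<le> K_cov * \<rho> ^ gap j j * Pnorm v j * Pnorm v j"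
      unfolding K_cov_def gap_def by (simp add: mult_ac)
    then show ?thesis using variance_cincr[of v j] equal by simp
  next
    case greater
    then show ?thesis using ordered[of j i] by (simp add: mult.commute gap_sym mult.left_commute)
  qed
qed

definition K_var :: real where "K_var = K_cov * (2 / (1 - \<rho>))"

lemma K_var_nonneg: "K_var \<ge> 0" unfolding K_var_def K_cov_def using \<rho>_range by simp

lemma block_variance_bound: assumes J: "finite J"
  shows "(\<integral>x. (\<Sum>j\<in>J. cincr v j x)\<^sup>2 \<partial>\<mu>) \<le> K_var * (\<Sum>j\<in>J. (Pnorm v j)\<^sup>2)"
proof -
  have ii: "integrable \<mu> (\<lambda>x. cincr v i x * cincr v j x)" for i j
    by (rule atomic_integrable[OF atomic_comp2'[OF cincr_atomic cincr_atomic]])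
  have "(\<integral>x. (\<Sum>j\<in>J. cincr v j x)\<^sup>2 \<partial>\<mu>) = (\<integral>x. (\<Sum>i\<in>J. \<Sum>j\<in>J. cincr v i x * cincr v j x) \<partial>\<mu>)"
    by (simp add: power2_eq_square sum_product)
  also have "\<dots> = (\<Sum>i\<in>J. \<Sum>j\<in>J. (\<integral>x. cincr v i x * cincr v j x \<partial>\<mu>))"
    using ii by (simp add: Bochner_Integration.integral_sum)
  also have "\<dots> \<le> K_var * (\<Sum>j\<in>J. (Pnorm v j)\<^sup>2)"
    unfolding K_var_def using L_ge2
    by (intro quadratic_form_bound[OF \<rho>_range(1,2) J _ covariance_bound]) (simp add: K_cov_def)
  finally show ?thesis .
qed

subsection \<open>Convergence in L2\<close>

definition csum :: "(nat \<Rightarrow> real) \<Rightarrow> nat \<Rightarrow> 'a \<Rightarrow> real" where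
  "csum v n x = (\<Sum>j\<in>{1..<n}. cincr v j x)"

lemma csum_atomic: "atomic n (csum v n)"
  unfolding atomic_def csum_def
proof (intro allI impI sum.cong refl)
  fix x y j assume e: "atom_of n x = atom_of n y" and j: "j \<in> {1..<n}"
  have "atomic n (cincr v j)" by (rule atomic_mono[OF _ cincr_atomic]) (use j in auto)
  then show "cincr v j x = cincr v j y" using e unfolding atomic_def by blast
qed

lemma g_centred_eq_csum: "KR_g T C h B v n x - (\<integral>y. KR_g T C h B v n y \<partial>\<mu>) = csum v n x"
proof -
  have "(\<integral>y. KR_g T C h B v n y \<partial>\<mu>) = (\<Sum>j\<in>{1..<n}. (\<integral>y. incr v j y \<partial>\<mu>))"
    unfolding g_eq_sum_incr
    by (rule Bochner_Integration.integral_sum) (rule atomic_integrable[OF incr_atomic])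
  then show ?thesis unfolding g_eq_sum_incr csum_def cincr_def by (simp add: sum_subtractf)
qed

context
  fixes v :: "nat \<Rightarrow> real"
  assumes summ: "summable (\<lambda>n. (Pnorm v (Suc (Suc n)))\<^sup>2)"
begin

lemma summable_Pnorm: "summable (\<lambda>j. (Pnorm v j)\<^sup>2)"
  using summ summable_iff_shift[of "\<lambda>j. (Pnorm v j)\<^sup>2" 2] by (simp add: numeral_2_eq_2)

definition tail :: "nat \<Rightarrow> real" where "tail n = (\<Sum>j. (Pnorm v j)\<^sup>2) - (\<Sum>j<n. (Pnorm v j)\<^sup>2)"

lemma tail_tendsto_0: "tail \<longlonglongrightarrow> 0"
  unfolding tail_def
  using tendsto_diff[OF tendsto_const[of "\<Sum>j. (Pnorm v j)\<^sup>2"] summable_LIMSEQ[OF summable_Pnorm]] by simp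

lemma csum_cauchy: assumes nm: "n \<le> m"
  shows "(\<integral>\<^sup>+ x. ennreal ((csum v m x - csum v n x)\<^sup>2) \<partial>\<mu>) \<le> ennreal (K_var * tail n)"
proof -
  define D where "D = {1..<m} - {1..<n}"
  have D: "finite D" "D \<subseteq> {n..<m}" unfolding D_def by auto
  have diff: "csum v m x - csum v n x = (\<Sum>j\<in>D. cincr v j x)" for x
    unfolding csum_def D_def using nm by (simp add: sum_diff)
  have "(\<integral>\<^sup>+ x. ennreal ((csum v m x - csum v n x)\<^sup>2) \<partial>\<mu>) = ennreal (\<integral>x. (csum v m x - csum v n x)\<^sup>2 \<partial>\<mu>)"
    by (intro nn_integral_eq_integral atomic_integrable[OF atomic_comp2'[OF csum_atomic csum_atomic]]) simp_all
  also have "\<dots> \<le> ennreal (K_var * (\<Sum>j\<in>D. (Pnorm v j)\<^sup>2))"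
    unfolding diff by (intro ennreal_leI block_variance_bound D)
  also have "\<dots> \<le> ennreal (K_var * tail n)"
  proof (intro ennreal_leI mult_left_mono K_var_nonneg)
    have "(\<Sum>j\<in>D. (Pnorm v j)\<^sup>2) \<le> (\<Sum>j\<in>{n..<m}. (Pnorm v j)\<^sup>2)" by (rule sum_mono2) (use D in auto)
    also have "\<dots> = (\<Sum>j<m. (Pnorm v j)\<^sup>2) - (\<Sum>j<n. (Pnorm v j)\<^sup>2)"
      using nm by (simp add: sum_diff[symmetric] atLeastLessThan_eq_atLeastAtMost_diff lessThan_minus_lessThan)
    also have "\<dots> \<le> tail n"
      unfolding tail_def using sum_le_suminf[OF summable_Pnorm, of "{..<m}"] by simp
    finally show "(\<Sum>j\<in>D. (Pnorm v j)\<^sup>2) \<le> tail n" .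
  qed
  finally show ?thesis .
qed

theorem centred_g_converges_L2:
  "\<exists>f \<in> borel_measurable \<mu>. (\<integral>\<^sup>+ x. ennreal ((f x)\<^sup>2) \<partial>\<mu>) < \<infinity> \<and>
     (\<lambda>n. \<integral>\<^sup>+ x. ennreal ((KR_g T C h B v n x - (\<integral>y. KR_g T C h B v n y \<partial>\<mu>) - f x)\<^sup>2) \<partial>\<mu>) \<longlonglongrightarrow> 0"
proof -
  obtain f where f: "f \<in> borel_measurable \<mu>"
    and dist: "\<And>n. (\<integral>\<^sup>+ x. ennreal ((csum v n x - f x)\<^sup>2) \<partial>\<mu>) \<le> ennreal (K_var * tail n)"
    using L2_Cauchy_limit[OF atomic_measurable[OF csum_atomic] csum_cauchy
        tendsto_mult_right_zero[OF tail_tendsto_0]] by blast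
  have "(\<lambda>n. \<integral>\<^sup>+ x. ennreal ((csum v n x - f x)\<^sup>2) \<partial>\<mu>) \<longlonglongrightarrow> 0"
  proof (rule tendsto_sandwich[of "\<lambda>_. 0" _ _ "\<lambda>n. ennreal (K_var * tail n)"])
    show "\<forall>\<^sub>F n in sequentially. (\<integral>\<^sup>+ x. ennreal ((csum v n x - f x)\<^sup>2) \<partial>\<mu>) \<le> ennreal (K_var * tail n)"
      using dist by simp
    have "(\<lambda>n. K_var * tail n) \<longlonglongrightarrow> K_var * 0" by (intro tendsto_mult tendsto_const tail_tendsto_0)
    then show "(\<lambda>n. ennreal (K_var * tail n)) \<longlonglongrightarrow> 0"
      using ennreal_0 by (metis mult_zero_right tendsto_ennrealI)
  qed simp_all
  moreover have "(\<integral>\<^sup>+ x. ennreal ((f x)\<^sup>2) \<partial>\<mu>) < \<infinity>"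
  proof -
    have "(\<integral>\<^sup>+ x. ennreal ((f x)\<^sup>2) \<partial>\<mu>) = (\<integral>\<^sup>+ x. ennreal ((csum v 0 x - f x)\<^sup>2) \<partial>\<mu>)"
      by (simp add: csum_def)
    also have "\<dots> \<le> ennreal (K_var * tail 0)" by (rule dist)
    also have "\<dots> < \<infinity>" by simp
    finally show ?thesis .
  qed
  ultimately show ?thesis using f unfolding g_centred_eq_csum by blast
qed

end

end

lemma KR_system_of_hypotheses:
  assumes homeo: "homeomorphism UNIV UNIV T (inv T)"
    and KR: "KR_sequence T C h B" and inv_mu: "invariant_prob T \<mu>"
    and LR: "linearly_recurrent_KR C h"
    and M_ge2: "\<And>n l k. n \<ge> 2 \<Longrightarrow> l \<in> {1..C n} \<Longrightarrow> k \<in> {1..C (n-1)} \<Longrightarrow> KR_M T h B n l k \<ge> 2"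
  shows "\<exists>L. KR_system T C h B \<mu> L"
proof -
  obtain L where L: "\<forall>n\<ge>1. \<forall>l\<in>{1..C n}. \<forall>k\<in>{1..C (n-1)}. real (h n l) \<le> L * real (h (n-1) k)"
    using LR unfolding linearly_recurrent_KR_def by blast
  have "real (h n l) \<le> max L 2 * real (h (n-1) k)" if "n \<ge> 1" "l \<in> {1..C n}" "k \<in> {1..C (n-1)}" for n l k
    using L that by (meson max.cobounded1 mult_right_mono of_nat_0_le_iff order_trans)
  moreover have "bij T"
    using homeo unfolding homeomorphism_def by (metis UNIV_I bij_betw_def inj_on_inverseI)
  ultimately have "KR_system T C h B \<mu> (max L 2)"
    using homeo KR inv_mu M_ge2 unfolding homeomorphism_def by unfold_locales auto
  then show ?thesis by blast
qed

theorem mainTheorem6: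
  fixes T :: "'a::metric_space \<Rightarrow> 'a"
    and C :: "nat \<Rightarrow> nat" and h :: "nat \<Rightarrow> nat \<Rightarrow> nat" and B :: "nat \<Rightarrow> nat \<Rightarrow> 'a set"
    and \<mu> :: "'a measure" and v :: "nat \<Rightarrow> real"
  assumes cantor: "is_cantor_space (UNIV :: 'a set)"
    and homeo: "homeomorphism UNIV UNIV T (inv T)"
    and minimal: "minimal_system T"
    and inv_mu: "invariant_prob T \<mu>"
    and unique: "\<And>\<nu>. invariant_prob T \<nu> \<Longrightarrow> \<nu> = \<mu>"
    and KR: "KR_sequence T C h B"
    and LR: "linearly_recurrent_KR C h"
    and M_ge2: "\<And>n l k. n \<ge> 2 \<Longrightarrow> l \<in> {1..C n} \<Longrightarrow> k \<in> {1..C (n-1)} \<Longrightarrow> KR_M T h B n l k \<ge> 2"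
    and H1: "\<And>k. k \<in> {1..C 1} \<Longrightarrow> h 1 k = 1"
    and summ: "summable (\<lambda>n. (KR_Pv_norm T C h B v (Suc (Suc n)))\<^sup>2)"
  shows "\<exists>f \<in> borel_measurable \<mu>. (\<integral>\<^sup>+ x. ennreal ((f x)\<^sup>2) \<partial>\<mu>) < \<infinity> \<and>
           (\<lambda>n. \<integral>\<^sup>+ x. ennreal ((KR_g T C h B v n x - (\<integral>y. KR_g T C h B v n y \<partial>\<mu>) - f x)\<^sup>2) \<partial>\<mu>)
             \<longlonglongrightarrow> 0"
proof -
  obtain L where "KR_system T C h B \<mu> L"
    using KR_system_of_hypotheses[OF homeo KR inv_mu LR M_ge2] by blast
  then show ?thesis using KR_system.centred_g_converges_L2 summ by blast
qed

end
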